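(* Let $k \subseteq K \subseteq E$ be fields and $d \geqslant 0$ an integer. Fix an algebraic closure $\overline{E}$ of $E$ and let $\overline{K}$ be the algebraic closure of $K$ in $\overline{E}$; all level $d$ closures below are taken inside these. (a) Let $K \subseteq L \subseteq \overline{K}$ be an intermediate field with $[L:K] < \infty$. Then $\operatorname{lev}_k(L/K) \leqslant d$ if and only if $L \subseteq K^{(d)}$. (b) $K^{(d)} \subseteq E^{(d)}$. Moreover, if $[E:K] < \infty$ and $\operatorname{lev}_k(E/K) \leqslant d$, then $K^{(d)} = E^{(d)}$. (c) $E^{(d)} = \bigcup E_{\rm f.g.}^{(d)}$, where the union is over all intermediate fields $K \subseteq E_{\rm f.g.} \subseteq E$ with $E_{\rm f.g.}$ finitely generated over $K$. (d) $(K^{(d)})^{(n)} = K^{(n)}$ for every $n \geqslant d$. In particular, $K^{(d)}$ is closed at level $d$.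
   Context: For fields $k \subseteq K$ and a finite-dimensional $K$-algebra $A$, $A$ descends to an intermediate field $k \subseteq K_0 \subseteq K$ if there is a $K_0$-algebra $A_0$ with $A \simeq A_0 \otimes_{K_0} K$; $\operatorname{ed}_k(A/K)$ is the minimum of $\operatorname{trdeg}_k(K_0)$ over such $K_0$. For a finite field extension $L/K$, $\operatorname{lev}_k(L/K)$ is the smallest $d \geq 0$ such that there is a tower $K = K_0 \subseteq \dots \subseteq K_m$ of finite field extensions with $\operatorname{ed}_k(K_i/K_{i-1}) \leq d$ for all $i$ and $L$ embedding into $K_m$ over $K$. For a field $F \supseteq k$ with algebraic closure $\overline{F}$, the level $d$ closure $F^{(d)}$ of $F$ in $\overline{F}$ is the compositum of all intermediate fields $F \subseteq L \subseteq \overline{F}$ with $[L:F] < \infty$ and $\operatorname{lev}_k(L/F) \leq d$. $F$ is closed at level $d$ if $F = F^{(d)}$. *)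

theory Defs
  imports "HOL-Computational_Algebra.Polynomial"
begin

text \<open>All fields are subfields of one ambient field (the type 'a), which in the
  statement plays the role of the fixed algebraic closure of E.\<close>

definition is_subfield :: "'a::field set \<Rightarrow> bool" where
  "is_subfield F \<longleftrightarrow> 0 \<in> F \<and> 1 \<in> F \<and>
     (\<forall>x\<in>F. \<forall>y\<in>F. x + y \<in> F \<and> x * y \<in> F) \<and>
     (\<forall>x\<in>F. - x \<in> F \<and> inverse x \<in> F)"

definition adjoin :: "'a::field set \<Rightarrow> 'a set \<Rightarrow> 'a set" where
  "adjoin F S = \<Inter>{M. is_subfield M \<and> F \<union> S \<subseteq> M}"

definition algebraic_over :: "'a::field set \<Rightarrow> 'a \<Rightarrow> bool" where
  "algebraic_over F x \<longleftrightarrow> (\<exists>p. p \<noteq> 0 \<and> (\<forall>i. coeff p i \<in> F) \<and> poly p x = 0)"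

definition alg_closure_in :: "'a::field set \<Rightarrow> 'a set" where
  "alg_closure_in F = {x. algebraic_over F x}"

definition span_over :: "'a::field set \<Rightarrow> 'a set \<Rightarrow> 'a set" where
  "span_over F B = {\<Sum>x\<in>T. c x * x | T c. finite T \<and> T \<subseteq> B \<and> (\<forall>x\<in>T. c x \<in> F)}"

definition lin_indep_over :: "'a::field set \<Rightarrow> 'a set \<Rightarrow> bool" where
  "lin_indep_over F T \<longleftrightarrow>
     (\<forall>U c. finite U \<and> U \<subseteq> T \<and> (\<forall>x\<in>U. c x \<in> F) \<and> (\<Sum>x\<in>U. c x * x) = 0
        \<longrightarrow> (\<forall>x\<in>U. c x = 0))"

definition finite_ext :: "'a::field set \<Rightarrow> 'a set \<Rightarrow> bool" where
  "finite_ext K L \<longleftrightarrow> K \<subseteq> L \<and> (\<exists>S. finite S \<and> S \<subseteq> L \<and> span_over K S = L)"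

text \<open>The finite-dimensional K-algebra A (a subfield containing K) descends to
  the subfield K0 \<subseteq> K: there is a K0-algebra A0 with A0 \<otimes>_K0 K \<cong> A.
  Written out: A0 is (the image of) a K0-subalgebra B of A such that the natural map
  B \<otimes>_K0 K \<rightarrow> A, b \<otimes> c \<mapsto> c b, is bijective, i.e. B spans A over K and
  K0-linearly independent elements of B stay K-linearly independent.\<close>
definition descends :: "'a::field set \<Rightarrow> 'a set \<Rightarrow> 'a set \<Rightarrow> bool" where
  "descends K A K0 \<longleftrightarrow> (\<exists>B. K0 \<subseteq> B \<and> B \<subseteq> A \<and>
      (\<forall>x\<in>B. \<forall>y\<in>B. x + y \<in> B \<and> x * y \<in> B \<and> - x \<in> B) \<and>
      span_over K B = A \<and>
      (\<forall>T. T \<subseteq> B \<and> lin_indep_over K0 T \<longrightarrow> lin_indep_over K T))"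

definition alg_indep :: "'a::field set \<Rightarrow> 'a set \<Rightarrow> bool" where
  "alg_indep k S \<longleftrightarrow> (\<forall>s\<in>S. \<not> algebraic_over (adjoin k (S - {s})) s)"

definition trdeg_le :: "'a::field set \<Rightarrow> 'a set \<Rightarrow> nat \<Rightarrow> bool" where
  "trdeg_le k K0 d \<longleftrightarrow> (\<exists>S. S \<subseteq> K0 \<and> alg_indep k S \<and>
      (\<forall>x\<in>K0. algebraic_over (adjoin k S) x) \<and> finite S \<and> card S \<le> d)"

definition ed_le :: "'a::field set \<Rightarrow> 'a set \<Rightarrow> 'a set \<Rightarrow> nat \<Rightarrow> bool" where
  "ed_le k K A d \<longleftrightarrow> (\<exists>K0. is_subfield K0 \<and> k \<subseteq> K0 \<and> K0 \<subseteq> K \<and>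
      descends K A K0 \<and> trdeg_le k K0 d)"

definition lev_le :: "'a::field set \<Rightarrow> 'a set \<Rightarrow> 'a set \<Rightarrow> nat \<Rightarrow> bool" where
  "lev_le k K L d \<longleftrightarrow> (\<exists>m Ks. Ks 0 = K \<and>
      (\<forall>i<m. is_subfield (Ks (Suc i)) \<and> finite_ext (Ks i) (Ks (Suc i)) \<and>
             ed_le k (Ks i) (Ks (Suc i)) d) \<and>
      L \<subseteq> Ks m)"

definition level_closure :: "'a::field set \<Rightarrow> nat \<Rightarrow> 'a set \<Rightarrow> 'a set" where
  "level_closure k d F = adjoin F (\<Union>{L. is_subfield L \<and> F \<subseteq> L \<and>
      L \<subseteq> alg_closure_in F \<and> finite_ext F L \<and> lev_le k F L d})"

end

(*
  The level d closure of F is the union of the tops of towers F(b_1)(b_2)...(b_m) in which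
  each b_i is algebraic over k(S_i) for an algebraically independent set S_i of at most d
  elements of the field reached so far.

  Such a simple step has essential dimension at most d: since the ambient field is
  algebraically closed, the minimal polynomial of b_i has its coefficients in the algebraic
  closure of k(S_i), so the step descends to (current field) \<inter> (algebraic closure of k(S_i)),
  a field of transcendence degree at most d over k. Conversely, an extension of essential
  dimension at most d is generated by a basis of its descended algebra, and every basis
  element is algebraic over the field of definition, hence over k(S) for a transcendence
  basis S of that field.

  Parts (a)-(d) then follow because such towers can be concatenated, pushed up to larger
  base fields, and involve only finitely many elements of the base field.
*)
theory Submission
  imports Defs
begin

section \<open>Subfields and adjunction\<close>

lemma
  assumes "is_subfield F"
  shows subfield_0: "0 \<in> F" and subfield_1: "1 \<in> F"
    and subfield_add: "x \<in> F \<Longrightarrow> y \<in> F \<Longrightarrow> x + y \<in> F"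
    and subfield_mult: "x \<in> F \<Longrightarrow> y \<in> F \<Longrightarrow> x * y \<in> F"
    and subfield_uminus: "x \<in> F \<Longrightarrow> - x \<in> F"
    and subfield_inverse: "x \<in> F \<Longrightarrow> inverse x \<in> F"
  using assms by (simp_all add: is_subfield_def)

lemma subfield_diff: "is_subfield F \<Longrightarrow> x \<in> F \<Longrightarrow> y \<in> F \<Longrightarrow> x - y \<in> F"
  by (metis diff_conv_add_uminus subfield_add subfield_uminus)

lemma subfield_divide: "is_subfield F \<Longrightarrow> x \<in> F \<Longrightarrow> y \<in> F \<Longrightarrow> x / y \<in> F"
  by (metis divide_inverse subfield_inverse subfield_mult)

lemma subfield_power: "is_subfield F \<Longrightarrow> x \<in> F \<Longrightarrow> x ^ n \<in> F"
  by (induction n) (auto intro: subfield_1 subfield_mult)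

lemma subfield_Inter: "(\<And>M. M \<in> \<M> \<Longrightarrow> is_subfield M) \<Longrightarrow> is_subfield (\<Inter>\<M>)"
  unfolding is_subfield_def by blast

lemma subfield_Int: "is_subfield A \<Longrightarrow> is_subfield B \<Longrightarrow> is_subfield (A \<inter> B)"
  unfolding is_subfield_def by blast

lemma subfield_adjoin: "is_subfield (adjoin F S)"
  unfolding adjoin_def by (rule subfield_Inter) auto

lemma adjoin_base_subset: "F \<subseteq> adjoin F S"
  and adjoin_gens_subset: "S \<subseteq> adjoin F S"
  unfolding adjoin_def by auto

lemma adjoin_minimal: "is_subfield M \<Longrightarrow> F \<subseteq> M \<Longrightarrow> S \<subseteq> M \<Longrightarrow> adjoin F S \<subseteq> M"
  unfolding adjoin_def by auto

lemma adjoin_mono: "F \<subseteq> F' \<Longrightarrow> S \<subseteq> S' \<Longrightarrow> adjoin F S \<subseteq> adjoin F' S'"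
  by (meson adjoin_base_subset adjoin_gens_subset adjoin_minimal subfield_adjoin order_trans)

lemma adjoin_empty: "is_subfield F \<Longrightarrow> adjoin F {} = F"
  by (rule subset_antisym[OF adjoin_minimal adjoin_base_subset]) auto

lemma adjoin_adjoin: "adjoin (adjoin F S) T = adjoin F (S \<union> T)"
proof (rule subset_antisym)
  show "adjoin (adjoin F S) T \<subseteq> adjoin F (S \<union> T)"
    by (intro adjoin_minimal subfield_adjoin adjoin_mono)
       (use adjoin_gens_subset[of "S \<union> T" F] in auto)
  have "F \<union> S \<subseteq> adjoin F S" "adjoin F S \<subseteq> adjoin (adjoin F S) T"
    by (simp_all add: adjoin_base_subset adjoin_gens_subset)
  then show "adjoin F (S \<union> T) \<subseteq> adjoin (adjoin F S) T"
    by (intro adjoin_minimal subfield_adjoin) (use adjoin_gens_subset[of T] in auto)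
qed

text \<open>The fields \<open>K(G \<union> Y)\<close> with \<open>G \<subseteq> E\<close> finite form a directed family, so their union is a
  subfield containing \<open>E\<close> and \<open>Y\<close>.\<close>

lemma adjoin_finite_base:
  assumes K: "is_subfield K" and KE: "K \<subseteq> E" and X: "finite X" "X \<subseteq> adjoin E Y"
  shows "\<exists>G. finite G \<and> G \<subseteq> E \<and> X \<subseteq> adjoin K (G \<union> Y)"
proof -
  define Z where "Z = {z. \<exists>G. finite G \<and> G \<subseteq> E \<and> z \<in> adjoin K (G \<union> Y)}"
  have combine: "\<exists>G. finite G \<and> G \<subseteq> E \<and> X' \<subseteq> adjoin K (G \<union> Y)"
    if "finite X'" "X' \<subseteq> Z" for X'
    using that
  proof (induction X' rule: finite_induct)
    case (insert x X')
    then obtain G1 G2 where "finite G1" "G1 \<subseteq> E" "X' \<subseteq> adjoin K (G1 \<union> Y)"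
      "finite G2" "G2 \<subseteq> E" "x \<in> adjoin K (G2 \<union> Y)"
      unfolding Z_def by auto
    moreover have "adjoin K (G1 \<union> Y) \<subseteq> adjoin K (G1 \<union> G2 \<union> Y)"
      "adjoin K (G2 \<union> Y) \<subseteq> adjoin K (G1 \<union> G2 \<union> Y)"
      by (rule adjoin_mono; auto)+
    ultimately show ?case by (intro exI[of _ "G1 \<union> G2"]) auto
  qed auto
  have "is_subfield Z"
    unfolding is_subfield_def
  proof (intro conjI ballI)
    show "0 \<in> Z" "1 \<in> Z"
      unfolding Z_def using subfield_adjoin[THEN subfield_0] subfield_adjoin[THEN subfield_1] by blast+
  next
    fix x y assume "x \<in> Z" "y \<in> Z"
    with combine[of "{x, y}"] obtain G where "finite G" "G \<subseteq> E" "x \<in> adjoin K (G \<union> Y)"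
      "y \<in> adjoin K (G \<union> Y)" by auto
    then show "x + y \<in> Z" "x * y \<in> Z"
      unfolding Z_def by (auto intro: subfield_adjoin[THEN subfield_add] subfield_adjoin[THEN subfield_mult])
  next
    fix x assume "x \<in> Z"
    then show "- x \<in> Z" "inverse x \<in> Z"
      unfolding Z_def by (auto intro: subfield_adjoin[THEN subfield_uminus] subfield_adjoin[THEN subfield_inverse])
  qed
  moreover have "E \<subseteq> Z"
    unfolding Z_def using adjoin_gens_subset[of "{_} \<union> Y" K] by blast
  moreover have "Y \<subseteq> Z"
    unfolding Z_def using adjoin_gens_subset[of "{} \<union> Y" K] by blast
  ultimately have "adjoin E Y \<subseteq> Z" by (rule adjoin_minimal)
  then show ?thesis using X by (intro combine) blast+
qed

section \<open>Polynomials with coefficients in a subfield\<close>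

definition poly_over :: "'a::field set \<Rightarrow> 'a poly \<Rightarrow> bool" where
  "poly_over F p \<longleftrightarrow> (\<forall>i. coeff p i \<in> F)"

lemma algebraic_over_poly_over: "algebraic_over F x \<longleftrightarrow> (\<exists>p. p \<noteq> 0 \<and> poly_over F p \<and> poly p x = 0)"
  unfolding algebraic_over_def poly_over_def by blast

lemma poly_over_mono: "F \<subseteq> G \<Longrightarrow> poly_over F p \<Longrightarrow> poly_over G p"
  by (auto simp: poly_over_def)

lemma poly_over_pCons_iff: "poly_over F (pCons a p) \<longleftrightarrow> a \<in> F \<and> poly_over F p"
  unfolding poly_over_def coeff_pCons by (auto split: nat.splits)

context
  fixes F :: "'a::field set"
  assumes F: "is_subfield F"
begin

lemma poly_over_0: "poly_over F 0"
  by (simp add: poly_over_def subfield_0[OF F])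

lemma poly_over_const: "c \<in> F \<Longrightarrow> poly_over F [:c:]"
  by (simp add: poly_over_pCons_iff poly_over_0)

lemma poly_over_monom: "c \<in> F \<Longrightarrow> poly_over F (monom c n)"
  by (simp add: poly_over_def coeff_monom subfield_0[OF F])

lemma poly_over_add: "poly_over F p \<Longrightarrow> poly_over F q \<Longrightarrow> poly_over F (p + q)"
  by (simp add: poly_over_def subfield_add[OF F])

lemma poly_over_uminus: "poly_over F p \<Longrightarrow> poly_over F (- p)"
  by (simp add: poly_over_def subfield_uminus[OF F])

lemma poly_over_diff: "poly_over F p \<Longrightarrow> poly_over F q \<Longrightarrow> poly_over F (p - q)"
  by (simp add: poly_over_def subfield_diff[OF F])

lemma poly_over_smult: "c \<in> F \<Longrightarrow> poly_over F p \<Longrightarrow> poly_over F (smult c p)"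
  by (simp add: poly_over_def subfield_mult[OF F])

lemma poly_over_mult: "poly_over F p \<Longrightarrow> poly_over F q \<Longrightarrow> poly_over F (p * q)"
  unfolding poly_over_def
  by (blast intro: coeff_mult_semiring_closed subfield_0[OF F] subfield_add[OF F] subfield_mult[OF F])

lemma poly_over_pcompose: "poly_over F p \<Longrightarrow> poly_over F q \<Longrightarrow> poly_over F (pcompose p q)"
  unfolding poly_over_def
  by (blast intro: coeff_pcompose_semiring_closed subfield_0[OF F] subfield_add[OF F] subfield_mult[OF F])

lemma poly_over_prod_linear: "set rs \<subseteq> F \<Longrightarrow> poly_over F (\<Prod>r\<leftarrow>rs. [:-r, 1:])"
proof (induction rs)
  case Nil
  show ?case using poly_over_const[OF subfield_1[OF F]] by (simp add: one_pCons)
next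
  case (Cons r rs)
  have "poly_over F [:-r, 1:]"
    using Cons.prems by (simp add: poly_over_pCons_iff poly_over_0 subfield_1[OF F] subfield_uminus[OF F])
  with Cons show ?case by (simp del: mult_pCons_left add: poly_over_mult)
qed

lemma poly_over_mod_monic:
  assumes h: "poly_over F h" "lead_coeff h = 1"
  shows "poly_over F p \<Longrightarrow> \<exists>q r. poly_over F r \<and> p = q * h + r \<and> (r = 0 \<or> degree r < degree h)"
proof (induction "degree p" arbitrary: p rule: less_induct)
  case less
  show ?case
  proof (cases "p = 0 \<or> degree p < degree h")
    case True
    then show ?thesis using less.prems by (intro exI[of _ 0] exI[of _ p]) auto
  next
    case False
    then have dle: "degree h \<le> degree p" by simp
    define p' where "p' = p - monom (lead_coeff p) (degree p - degree h) * h"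
    have p'_over: "poly_over F p'"
      using less.prems h unfolding p'_def
      by (intro poly_over_diff poly_over_mult poly_over_monom) (auto simp: poly_over_def)
    show ?thesis
    proof (cases "degree h = 0")
      case True
      then have "h = [:1:]" using degree_0_id[of h] h(2) by simp
      then have "h = 1" by (simp add: one_pCons)
      then show ?thesis using less.prems poly_over_0 by (intro exI[of _ p] exI[of _ 0]) auto
    next
      case False
      have "coeff p' i = 0" if "i \<ge> degree p" for i
        using that dle h(2) by (cases "i = degree p") (auto simp: p'_def coeff_monom_mult coeff_eq_0)
      moreover have "degree p > 0" using False dle by simp
      ultimately have "degree p' \<le> degree p - 1" by (intro degree_le) auto
      then have "degree p' < degree p" using \<open>degree p > 0\<close> by simp
      from less.hyps[OF this p'_over] obtain q r where
        "poly_over F r" "p' = q * h + r" "r = 0 \<or> degree r < degree h" by blast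
      then show ?thesis
        by (intro exI[of _ "q + monom (lead_coeff p) (degree p - degree h)"] exI[of _ r])
           (auto simp: p'_def algebra_simps)
    qed
  qed
qed

lemma poly_in_subfield: "is_subfield M \<Longrightarrow> F \<subseteq> M \<Longrightarrow> poly_over F p \<Longrightarrow> z \<in> M \<Longrightarrow> poly p z \<in> M"
  by (induction p) (auto simp: poly_over_pCons_iff intro: subfield_0 subfield_add subfield_mult)

end

section \<open>Spans and linear independence over a subfield\<close>

lemma span_overI:
  "finite T \<Longrightarrow> T \<subseteq> B \<Longrightarrow> \<forall>x\<in>T. c x \<in> F \<Longrightarrow> (\<Sum>x\<in>T. c x * x) \<in> span_over F B"
  unfolding span_over_def by blast

lemma span_over_0: "0 \<in> span_over F B"
  using span_overI[of "{}" B] by simp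

lemma span_over_induct:
  assumes "v \<in> span_over F B" "0 \<in> Z" "\<And>a x. a \<in> F \<Longrightarrow> x \<in> B \<Longrightarrow> a * x \<in> Z"
    "\<And>x y. x \<in> Z \<Longrightarrow> y \<in> Z \<Longrightarrow> x + y \<in> Z"
  shows "v \<in> Z"
proof -
  from assms(1) obtain T c where T: "finite T" "T \<subseteq> B" "\<forall>x\<in>T. c x \<in> F"
    and v: "v = (\<Sum>x\<in>T. c x * x)"
    unfolding span_over_def by blast
  from T have "(\<Sum>x\<in>T. c x * x) \<in> Z"
    by (induction T rule: finite_induct) (use assms in auto)
  with v show ?thesis by simp
qed

lemma span_over_mono: "B \<subseteq> B' \<Longrightarrow> span_over F B \<subseteq> span_over F B'"
  unfolding span_over_def by blast

lemma span_over_field_mono: "F \<subseteq> F' \<Longrightarrow> span_over F B \<subseteq> span_over F' B"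
  unfolding span_over_def by blast

lemma span_over_subset_subfield: "is_subfield M \<Longrightarrow> F \<subseteq> M \<Longrightarrow> B \<subseteq> M \<Longrightarrow> span_over F B \<subseteq> M"
  by (auto elim!: span_over_induct intro: subfield_0 subfield_add subfield_mult)

lemma lin_indep_over_empty: "lin_indep_over F {}"
  unfolding lin_indep_over_def by simp

lemma lin_indep_over_subset: "lin_indep_over F T \<Longrightarrow> U \<subseteq> T \<Longrightarrow> lin_indep_over F U"
  unfolding lin_indep_over_def by blast

context
  fixes F :: "'a::field set"
  assumes F: "is_subfield F"
begin

lemma span_over_base: "x \<in> B \<Longrightarrow> x \<in> span_over F B"
  using span_overI[of "{x}" B "\<lambda>_. 1"] subfield_1[OF F] by simp

lemma span_over_superset: "B \<subseteq> span_over F B"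
  using span_over_base by blast

lemma span_over_add:
  assumes "v \<in> span_over F B" "w \<in> span_over F B"
  shows "v + w \<in> span_over F B"
proof -
  from assms obtain T1 c1 T2 c2 where T: "finite T1" "T1 \<subseteq> B" "\<forall>x\<in>T1. c1 x \<in> F"
    "finite T2" "T2 \<subseteq> B" "\<forall>x\<in>T2. c2 x \<in> F"
    and vw: "v = (\<Sum>x\<in>T1. c1 x * x)" "w = (\<Sum>x\<in>T2. c2 x * x)"
    unfolding span_over_def by blast
  define c where "c x = (if x \<in> T1 then c1 x else 0) + (if x \<in> T2 then c2 x else 0)" for x
  have "(\<Sum>x\<in>T1 \<union> T2. c x * x) =
      (\<Sum>x\<in>T1 \<union> T2. if x \<in> T1 then c1 x * x else 0) + (\<Sum>x\<in>T1 \<union> T2. if x \<in> T2 then c2 x * x else 0)"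
    unfolding sum.distrib[symmetric] by (rule sum.cong) (auto simp: c_def distrib_right)
  also have "\<dots> = v + w"
    using T by (simp add: sum.If_cases Int_absorb1 vw)
  finally have "v + w = (\<Sum>x\<in>T1 \<union> T2. c x * x)" by simp
  moreover have "\<forall>x\<in>T1 \<union> T2. c x \<in> F"
    using T unfolding c_def by (auto intro!: subfield_add[OF F] subfield_0[OF F])
  ultimately show ?thesis using T span_overI[of "T1 \<union> T2" B c] by auto
qed

lemma span_over_scale:
  assumes a: "a \<in> F" and v: "v \<in> span_over F B"
  shows "a * v \<in> span_over F B"
proof -
  from v obtain T c where T: "finite T" "T \<subseteq> B" "\<forall>x\<in>T. c x \<in> F" and v: "v = (\<Sum>x\<in>T. c x * x)"
    unfolding span_over_def by blast
  have "a * v = (\<Sum>x\<in>T. (a * c x) * x)" by (simp add: v sum_distrib_left mult.assoc)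
  then show ?thesis using T a span_overI[of T B "\<lambda>x. a * c x"] by (simp add: subfield_mult[OF F])
qed

lemma span_over_lincomb:
  "(\<And>i. i \<in> I \<Longrightarrow> c i \<in> F) \<Longrightarrow> (\<And>i. i \<in> I \<Longrightarrow> f i \<in> span_over F B)
   \<Longrightarrow> (\<Sum>i\<in>I. c i * f i) \<in> span_over F B"
  by (induction I rule: infinite_finite_induct) (auto intro: span_over_0 span_over_add span_over_scale)

lemma span_over_subset_span: "A \<subseteq> span_over F B \<Longrightarrow> span_over F A \<subseteq> span_over F B"
  by (auto elim!: span_over_induct intro: span_over_0 span_over_add span_over_scale)

lemma span_over_contains_field: "1 \<in> B \<Longrightarrow> F \<subseteq> span_over F B"
  using span_over_scale[of _ 1 B] span_over_base[of 1 B] by auto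

lemma span_over_finite_coeffs:
  assumes S: "finite S" and v: "v \<in> span_over F S"
  obtains a where "\<forall>s\<in>S. a s \<in> F" "v = (\<Sum>s\<in>S. a s * s)"
proof -
  from v obtain T c where T: "finite T" "T \<subseteq> S" "\<forall>x\<in>T. c x \<in> F" and v: "v = (\<Sum>x\<in>T. c x * x)"
    unfolding span_over_def by blast
  define a where "a x = (if x \<in> T then c x else 0)" for x
  have "(\<Sum>s\<in>S. a s * s) = (\<Sum>s\<in>T. a s * s)"
    by (rule sum.mono_neutral_right) (use S T in \<open>auto simp: a_def\<close>)
  also have "\<dots> = v" by (simp add: v a_def)
  finally show ?thesis using T subfield_0[OF F] by (intro that[of a]) (auto simp: a_def)
qed

lemma lin_relation_solve:
  fixes c :: "'a \<Rightarrow> 'a"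
  assumes U: "finite U" "(\<Sum>x\<in>U. c x * x) = v" and t: "t \<in> U" "c t \<noteq> 0"
  shows "t = (1 / c t) * v + (\<Sum>x\<in>U - {t}. (- c x / c t) * x)"
proof -
  define R where "R = (\<Sum>x\<in>U - {t}. c x * x)"
  have v: "v = c t * t + R"
    using U t by (simp add: sum.remove R_def)
  have "(\<Sum>x\<in>U - {t}. (- c x / c t) * x) = (\<Sum>x\<in>U - {t}. - (c x * x / c t))"
    by (intro sum.cong refl) simp
  also have "\<dots> = - R / c t"
    by (simp add: R_def sum_divide_distrib sum_negf)
  finally show ?thesis
    using t(2) by (simp add: v field_simps)
qed

lemma lin_relation_in_span:
  assumes U: "finite U" "\<forall>x\<in>U. c x \<in> F" "(\<Sum>x\<in>U. c x * x) = 0" and t: "t \<in> U" "c t \<noteq> 0"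
  shows "t \<in> span_over F (U - {t})"
proof -
  have "t = (\<Sum>x\<in>U - {t}. (- c x / c t) * x)"
    using lin_relation_solve[OF U(1,3) t] by simp
  also have "\<dots> \<in> span_over F (U - {t})"
    using U(2) t by (intro span_over_lincomb span_over_base subfield_divide[OF F] subfield_uminus[OF F]) auto
  finally show ?thesis .
qed

lemma not_lin_indep_over_in_span:
  assumes "\<not> lin_indep_over F T"
  obtains t where "t \<in> T" "t \<in> span_over F (T - {t})"
proof -
  from assms obtain U c t where U: "finite U" "U \<subseteq> T" "\<forall>x\<in>U. c x \<in> F" "(\<Sum>x\<in>U. c x * x) = 0"
    and t: "t \<in> U" "c t \<noteq> 0"
    unfolding lin_indep_over_def by blast
  show ?thesis
    using lin_relation_in_span[OF U(1,3,4) t] span_over_mono[of "U - {t}" "T - {t}"] U(2) t(1)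
    by (intro that[of t]) auto
qed

lemma lin_indep_over_not_in_span:
  assumes ind: "lin_indep_over F U" and u: "u \<in> U"
  shows "u \<notin> span_over F (U - {u})"
proof
  assume "u \<in> span_over F (U - {u})"
  then obtain T c where T: "finite T" "T \<subseteq> U - {u}" "\<forall>x\<in>T. c x \<in> F"
    and u_eq: "u = (\<Sum>x\<in>T. c x * x)"
    unfolding span_over_def by blast
  define c' where "c' = c(u := -1)"
  have "u \<notin> T" using T(2) by blast
  then have "(\<Sum>x\<in>T. c' x * x) = u"
    unfolding u_eq c'_def by (intro sum.cong) auto
  then have "(\<Sum>x\<in>insert u T. c' x * x) = 0"
    using T(1) \<open>u \<notin> T\<close> by (simp add: c'_def)
  moreover have "\<forall>x\<in>insert u T. c' x \<in> F"
    using T(3) subfield_1[OF F] subfield_uminus[OF F] by (simp add: c'_def)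
  moreover have "finite (insert u T)" "insert u T \<subseteq> U" using T u by auto
  ultimately have "c' u = 0"
    using ind[unfolded lin_indep_over_def, rule_format, of "insert u T" c'] by blast
  then show False by (simp add: c'_def)
qed

lemma lin_indep_over_insert:
  assumes ind: "lin_indep_over F U" and w: "w \<notin> span_over F U"
  shows "lin_indep_over F (insert w U)"
  unfolding lin_indep_over_def
proof (intro allI impI)
  fix V c
  assume "finite V \<and> V \<subseteq> insert w U \<and> (\<forall>x\<in>V. c x \<in> F) \<and> (\<Sum>x\<in>V. c x * x) = 0"
  then have V: "finite V" "V \<subseteq> insert w U" "\<forall>x\<in>V. c x \<in> F" "(\<Sum>x\<in>V. c x * x) = 0" by auto
  have cw: "c w = 0" if wV: "w \<in> V"
  proof (rule ccontr)
    assume "c w \<noteq> 0"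
    with V wV have "w \<in> span_over F (V - {w})" by (intro lin_relation_in_span)
    also have "\<dots> \<subseteq> span_over F U" using V(2) by (intro span_over_mono) auto
    finally show False using w by contradiction
  qed
  have "(\<Sum>x\<in>V - {w}. c x * x) = 0"
  proof (cases "w \<in> V")
    case True
    then show ?thesis using V(1,4) cw by (simp add: sum.remove)
  qed (use V(4) in simp)
  moreover have "finite (V - {w})" "V - {w} \<subseteq> U" using V(1,2) by auto
  ultimately have "\<forall>x\<in>V - {w}. c x = 0"
    using ind[unfolded lin_indep_over_def, rule_format, of "V - {w}" c] V(3) by auto
  with cw show "\<forall>x\<in>V. c x = 0" by blast
qed

lemma span_over_exchange:
  assumes S: "finite S" "\<forall>x\<in>S. a x \<in> F" and s: "s \<in> S" "a s \<noteq> 0"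
  shows "S \<subseteq> span_over F (insert (\<Sum>x\<in>S. a x * x) (S - {s}))" (is "_ \<subseteq> span_over F ?S'")
proof -
  have "s = (1 / a s) * (\<Sum>x\<in>S. a x * x) + (\<Sum>x\<in>S - {s}. (- a x / a s) * x)"
    by (rule lin_relation_solve[where c = a, OF S(1) refl s])
  also have "\<dots> \<in> span_over F ?S'"
    using S s by (intro span_over_add span_over_scale span_over_lincomb span_over_base)
      (auto intro: subfield_divide[OF F] subfield_uminus[OF F] subfield_1[OF F])
  finally show ?thesis
    using span_over_base[of _ ?S'] by blast
qed

lemma lin_indep_over_card_le_finite:
  "finite S \<Longrightarrow> finite U \<Longrightarrow> U \<subseteq> span_over F S \<Longrightarrow> lin_indep_over F U \<Longrightarrow> card U \<le> card S"
proof (induction "card (U - S)" arbitrary: S rule: less_induct)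
  case less
  show ?case
  proof (cases "U \<subseteq> S")
    case True
    then show ?thesis using less.prems by (simp add: card_mono)
  next
    case False
    then obtain u where u: "u \<in> U" "u \<notin> S" by blast
    from span_over_finite_coeffs[OF less.prems(1)] u(1) less.prems(3)
    obtain a where a: "\<forall>s\<in>S. a s \<in> F" and ua: "u = (\<Sum>s\<in>S. a s * s)" by blast
    have "\<exists>s\<in>S - U. a s \<noteq> 0"
    proof (rule ccontr)
      assume "\<not> ?thesis"
      then have "u = (\<Sum>s\<in>S \<inter> U. a s * s)"
        using ua less.prems(1) by (intro trans[OF ua] sum.mono_neutral_right) auto
      also have "\<dots> \<in> span_over F (U - {u})"
        using a u(2) by (intro span_over_lincomb span_over_base) auto
      finally show False using lin_indep_over_not_in_span[OF less.prems(4) u(1)] by contradiction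
    qed
    then obtain s where s: "s \<in> S" "s \<notin> U" "a s \<noteq> 0" by blast
    define S' where "S' = insert u (S - {s})"
    have "S \<subseteq> span_over F S'"
      unfolding S'_def ua by (rule span_over_exchange[OF less.prems(1) a s(1,3)])
    then have U_span: "U \<subseteq> span_over F S'"
      using less.prems(3) span_over_subset_span by blast
    have "U - S' = (U - S) - {u}"
      using s(2) by (auto simp: S'_def)
    then have "card (U - S') < card (U - S)"
      using u less.prems(2) card_Diff1_less[of "U - S" u] by simp
    then have "card U \<le> card S'"
      by (rule less.hyps) (use less.prems(1,2,4) U_span in \<open>simp_all add: S'_def\<close>)
    moreover have "card S' = card S"
      using less.prems(1) u(2) s(1) card_Diff1_less[of S s] by (simp add: S'_def card_insert_if)
    ultimately show ?thesis by simp
  qed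
qed

lemma lin_indep_over_card_le:
  assumes S: "finite S" and US: "U \<subseteq> span_over F S" and ind: "lin_indep_over F U"
  shows "finite U \<and> card U \<le> card S"
proof (cases "finite U")
  case False
  from infinite_arbitrarily_large[OF this]
  obtain U' where U': "U' \<subseteq> U" "finite U'" "card U' = Suc (card S)" by blast
  have "card U' \<le> card S"
    using U' US ind lin_indep_over_subset
    by (intro lin_indep_over_card_le_finite[OF S U'(2)]) auto
  with U' show ?thesis by simp
qed (use lin_indep_over_card_le_finite[OF S _ US ind] in simp)

lemma lin_indep_over_extend:
  assumes T: "T \<subseteq> X" "lin_indep_over F T"
    and bound: "\<And>V. V \<subseteq> X \<Longrightarrow> lin_indep_over F V \<Longrightarrow> finite V \<and> card V \<le> N"
  obtains T' where "T \<subseteq> T'" "T' \<subseteq> X" "lin_indep_over F T'" "finite T'" "X \<subseteq> span_over F T'"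
proof -
  let ?P = "\<lambda>V. T \<subseteq> V \<and> V \<subseteq> X \<and> lin_indep_over F V"
  have "\<exists>V. ?P V \<and> (\<forall>W. ?P W \<longrightarrow> card W \<le> card V)"
    by (rule ex_has_greatest_nat[where b = "Suc N"]) (use T bound in \<open>auto simp: less_Suc_eq_le\<close>)
  then obtain V where V: "?P V" and max: "\<And>W. ?P W \<Longrightarrow> card W \<le> card V" by blast
  have fin: "finite V" using bound V by blast
  have "X \<subseteq> span_over F V"
  proof
    fix x assume x: "x \<in> X"
    show "x \<in> span_over F V"
    proof (rule ccontr)
      assume nx: "x \<notin> span_over F V"
      then have "card (insert x V) \<le> card V" using V x lin_indep_over_insert by (intro max) auto
      moreover have "x \<notin> V" using nx span_over_base by blast
      ultimately show False using fin by simp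
    qed
  qed
  with V fin show ?thesis by (intro that[of V]) auto
qed

end

section \<open>Algebraic elements and minimal polynomials\<close>

lemma algebraic_over_mono: "F \<subseteq> G \<Longrightarrow> algebraic_over F x \<Longrightarrow> algebraic_over G x"
  unfolding algebraic_over_def by blast

lemma poly_sum_monom_powers:
  fixes z :: "'a::field"
  assumes inj: "inj_on (\<lambda>i. z ^ i) I" and I: "finite I" and V: "V \<subseteq> (\<lambda>i. z ^ i) ` I"
    and q: "q = (\<Sum>i\<in>I. monom (if z ^ i \<in> V then c (z ^ i) else 0) i)"
  shows "coeff q j = (if j \<in> I \<and> z ^ j \<in> V then c (z ^ j) else 0)"
    and "poly q z = (\<Sum>v\<in>V. c v * v)"
proof -
  show "coeff q j = (if j \<in> I \<and> z ^ j \<in> V then c (z ^ j) else 0)"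
    unfolding q coeff_sum coeff_monom using I by (simp add: sum.delta)
  have "poly q z = (\<Sum>i\<in>I. if z ^ i \<in> V then c (z ^ i) * z ^ i else 0)"
    unfolding q poly_sum poly_monom by (intro sum.cong) auto
  also have "\<dots> = (\<Sum>i\<in>{i\<in>I. z ^ i \<in> V}. c (z ^ i) * z ^ i)"
    using I by (rule sum.inter_filter[symmetric])
  also have "\<dots> = (\<Sum>v\<in>(\<lambda>i. z ^ i) ` {i\<in>I. z ^ i \<in> V}. c v * v)"
    by (rule sum.reindex[symmetric, unfolded comp_def]) (rule inj_on_subset[OF inj], auto)
  also have "(\<lambda>i. z ^ i) ` {i\<in>I. z ^ i \<in> V} = V" using V by auto
  finally show "poly q z = (\<Sum>v\<in>V. c v * v)" .
qed

lemma poly_power_diff_root: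
  fixes z :: "'a::field"
  assumes "is_subfield F" "i \<noteq> j" "z ^ i = z ^ j"
  obtains q where "q \<noteq> 0" "poly q z = 0" "degree q \<le> max i j" "poly_over F q"
proof -
  define q where "q = monom (1::'a) (max i j) - monom 1 (min i j)"
  have "coeff q (max i j) = 1" using assms(2) by (simp add: q_def coeff_monom)
  then have "q \<noteq> 0" by auto
  moreover have "poly q z = 0" using assms(3) by (simp add: q_def poly_monom max_def min_def)
  moreover have "degree q \<le> max i j" unfolding q_def by (rule degree_le) (auto simp: coeff_monom)
  moreover have "poly_over F q"
    unfolding q_def using assms(1) by (intro poly_over_diff poly_over_monom subfield_1)
  ultimately show ?thesis by (rule that)
qed

context
  fixes F :: "'a::field set"
  assumes F: "is_subfield F"
begin

lemma algebraic_over_mem: "x \<in> F \<Longrightarrow> algebraic_over F x"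
  unfolding algebraic_over_poly_over
  by (rule exI[of _ "[:-x, 1:]"])
     (simp add: poly_over_pCons_iff poly_over_0[OF F] subfield_1[OF F] subfield_uminus[OF F])

text \<open>If all powers of \<open>z\<close> lie in a finite-dimensional space, \<open>card P + 1\<close> of them are dependent.\<close>

lemma algebraic_over_if_powers_in_span:
  assumes P: "finite P" and pow: "\<And>i. z ^ i \<in> span_over F P"
  shows "algebraic_over F z"
proof (cases "inj_on (\<lambda>i. z ^ i) {..card P}")
  case False
  then obtain i j where "i \<noteq> j" "z ^ i = z ^ j" unfolding inj_on_def by auto
  with F obtain q where "q \<noteq> 0" "poly q z = 0" "poly_over F q"
    by (auto elim: poly_power_diff_root)
  then show ?thesis unfolding algebraic_over_poly_over by blast
next
  case True
  define U where "U = (\<lambda>i. z ^ i) ` {..card P}"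
  have "\<not> lin_indep_over F U"
  proof
    assume "lin_indep_over F U"
    moreover have "U \<subseteq> span_over F P" using pow unfolding U_def by auto
    ultimately have "card U \<le> card P" using lin_indep_over_card_le[OF F P] by blast
    moreover have "card U = Suc (card P)" unfolding U_def using True by (simp add: card_image)
    ultimately show False by simp
  qed
  then obtain V c where V: "finite V" "V \<subseteq> U" "\<forall>x\<in>V. c x \<in> F" "(\<Sum>x\<in>V. c x * x) = 0"
    and nz: "\<exists>x\<in>V. c x \<noteq> 0" unfolding lin_indep_over_def by blast
  define q where "q = (\<Sum>i\<in>{..card P}. monom (if z ^ i \<in> V then c (z ^ i) else 0) i)"
  note q = poly_sum_monom_powers[OF True finite_atMost V(2)[unfolded U_def] q_def]
  from nz V(2) obtain i where "i \<le> card P" "z ^ i \<in> V" "c (z ^ i) \<noteq> 0"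
    unfolding U_def by auto
  then have "coeff q i \<noteq> 0" using q(1)[of i] by simp
  then have "q \<noteq> 0" by auto
  moreover have "poly q z = 0" using q(2) V(4) by simp
  moreover have "poly_over F q" unfolding poly_over_def q(1) using V(3) subfield_0[OF F] by auto
  ultimately show ?thesis unfolding algebraic_over_poly_over by blast
qed

lemma algebraic_over_if_in_finite_span_ring:
  assumes "finite P" "R \<subseteq> span_over F P" "1 \<in> R" "\<And>x y. x \<in> R \<Longrightarrow> y \<in> R \<Longrightarrow> x * y \<in> R" "z \<in> R"
  shows "algebraic_over F z"
proof -
  have "z ^ i \<in> R" for i by (induction i) (use assms in auto)
  then show ?thesis using assms(1,2) by (intro algebraic_over_if_powers_in_span) auto
qed

lemma inverse_eq_poly_if_algebraic:
  assumes alg: "algebraic_over F z" and z: "z \<noteq> 0"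
  obtains r where "poly_over F r" "inverse z = poly r z"
proof -
  let ?P = "\<lambda>p. p \<noteq> 0 \<and> poly_over F p \<and> poly p z = 0"
  obtain p where p: "?P p" and min: "\<And>p'. ?P p' \<Longrightarrow> degree p \<le> degree p'"
    using ex_has_least_nat[of ?P _ degree] alg unfolding algebraic_over_poly_over by blast
  obtain a r where ar: "p = pCons a r" by (cases p)
  have r: "poly_over F r" and a: "a \<in> F" using p ar by (auto simp: poly_over_pCons_iff)
  have "a \<noteq> 0"
  proof
    assume "a = 0"
    then have "?P r" using p ar z r by auto
    then have "degree p \<le> degree r" by (rule min)
    with \<open>?P r\<close> show False using ar by simp
  qed
  have "z * poly r z = - a" using p ar by (simp add: eq_neg_iff_add_eq_0 add.commute)
  then have "inverse z = poly (smult (- inverse a) r) z"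
    using \<open>a \<noteq> 0\<close> z by (simp add: field_simps)
  moreover have "poly_over F (smult (- inverse a) r)"
    using a r by (intro poly_over_smult[OF F] subfield_uminus[OF F] subfield_inverse[OF F])
  ultimately show ?thesis by (rule that[rotated])
qed

end

definition is_minpoly :: "'a::field set \<Rightarrow> 'a \<Rightarrow> 'a poly \<Rightarrow> bool" where
  "is_minpoly F b h \<longleftrightarrow> poly_over F h \<and> lead_coeff h = 1 \<and> poly h b = 0 \<and>
     (\<forall>p. poly_over F p \<and> p \<noteq> 0 \<and> poly p b = 0 \<longrightarrow> degree h \<le> degree p)"

lemma is_minpoly_degree_le:
  "is_minpoly F b h \<Longrightarrow> poly_over F p \<Longrightarrow> p \<noteq> 0 \<Longrightarrow> poly p b = 0 \<Longrightarrow> degree h \<le> degree p"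
  unfolding is_minpoly_def by blast

lemma is_minpoly_subfield:
  assumes "is_minpoly F b h" "K \<subseteq> F" "poly_over K h"
  shows "is_minpoly K b h"
  using assms poly_over_mono[OF assms(2)] unfolding is_minpoly_def by blast

context
  fixes F :: "'a::field set"
  assumes F: "is_subfield F"
begin

lemma minpoly_exists:
  assumes "algebraic_over F b"
  obtains h where "is_minpoly F b h"
proof -
  let ?P = "\<lambda>p. p \<noteq> 0 \<and> poly_over F p \<and> poly p b = 0"
  obtain p where p: "?P p" and min: "\<And>p'. ?P p' \<Longrightarrow> degree p \<le> degree p'"
    using ex_has_least_nat[of ?P _ degree] assms unfolding algebraic_over_poly_over by blast
  define h where "h = smult (inverse (lead_coeff p)) p"
  have "lead_coeff p \<in> F" using p by (simp add: poly_over_def)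
  then have "poly_over F h" unfolding h_def using p by (intro poly_over_smult[OF F] subfield_inverse[OF F]) auto
  moreover have "lead_coeff h = 1" "poly h b = 0" "degree h = degree p" using p by (auto simp: h_def)
  ultimately show ?thesis using min by (intro that) (auto simp: is_minpoly_def)
qed

lemma minpoly_remainder:
  assumes h: "is_minpoly F b h" and p: "poly_over F p"
  obtains q r where "poly_over F r" "p = q * h + r" "poly r b = poly p b" "r = 0 \<or> degree r < degree h"
proof -
  have "poly_over F h" "lead_coeff h = 1" "poly h b = 0" using h unfolding is_minpoly_def by auto
  with poly_over_mod_monic[OF F _ _ p] that show ?thesis by force
qed

lemma minpoly_dvd:
  assumes h: "is_minpoly F b h" and p: "poly_over F p" "poly p b = 0"
  shows "h dvd p"
proof -
  obtain q r where r: "poly_over F r" "p = q * h + r" "poly r b = poly p b"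
    "r = 0 \<or> degree r < degree h"
    by (rule minpoly_remainder[OF h p(1)])
  have "r = 0"
  proof (rule ccontr)
    assume "r \<noteq> 0"
    then have "degree h \<le> degree r" using is_minpoly_degree_le[OF h r(1)] r(3) p(2) by simp
    with r(4) \<open>r \<noteq> 0\<close> show False by simp
  qed
  with r(2) show ?thesis by simp
qed

lemma minpoly_powers_lin_indep:
  assumes h: "is_minpoly F b h"
  shows "inj_on (\<lambda>i. b ^ i) {..<degree h}" and "lin_indep_over F ((\<lambda>i. b ^ i) ` {..<degree h})"
proof -
  show inj: "inj_on (\<lambda>i. b ^ i) {..<degree h}"
  proof (rule inj_onI, rule ccontr)
    fix i j assume ij: "i \<in> {..<degree h}" "j \<in> {..<degree h}" "b ^ i = b ^ j" "i \<noteq> j"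
    obtain q where q: "q \<noteq> 0" "poly q b = 0" "degree q \<le> max i j" "poly_over F q"
      by (rule poly_power_diff_root[OF F ij(4,3)])
    have "degree h \<le> degree q" by (rule is_minpoly_degree_le[OF h q(4) q(1,2)])
    with q(3) ij(1,2) show False by simp
  qed
  show "lin_indep_over F ((\<lambda>i. b ^ i) ` {..<degree h})"
    unfolding lin_indep_over_def
  proof (intro allI impI, elim conjE)
    fix V c
    assume V: "finite V" "V \<subseteq> (\<lambda>i. b ^ i) ` {..<degree h}" "\<forall>x\<in>V. c x \<in> F" "(\<Sum>x\<in>V. c x * x) = 0"
    define q where "q = (\<Sum>i\<in>{..<degree h}. monom (if b ^ i \<in> V then c (b ^ i) else 0) i)"
    note q = poly_sum_monom_powers[OF inj finite_lessThan V(2) q_def]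
    have "q = 0"
    proof (rule ccontr)
      assume "q \<noteq> 0"
      have "poly_over F q" unfolding poly_over_def q(1) using V(3) subfield_0[OF F] by auto
      then have "degree h \<le> degree q" using is_minpoly_degree_le[OF h] \<open>q \<noteq> 0\<close> q(2) V(4) by simp
      moreover have "coeff q (degree q) \<noteq> 0" using \<open>q \<noteq> 0\<close> by simp
      then have "degree q < degree h" using q(1)[of "degree q"] by (auto split: if_splits)
      ultimately show False by simp
    qed
    show "\<forall>x\<in>V. c x = 0"
    proof
      fix x assume "x \<in> V"
      with V(2) obtain i where "i < degree h" "x = b ^ i" by auto
      with \<open>x \<in> V\<close> q(1)[of i] \<open>q = 0\<close> show "c x = 0" by simp
    qed
  qed
qed

end

section \<open>Simple and finite extensions\<close>

definition poly_values :: "'a::field set \<Rightarrow> 'a \<Rightarrow> 'a set" where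
  "poly_values F b = {poly p b | p. poly_over F p}"

lemma poly_valuesI: "poly_over F p \<Longrightarrow> poly p b \<in> poly_values F b"
  unfolding poly_values_def by blast

lemma poly_valuesE: "x \<in> poly_values F b \<Longrightarrow> (\<And>p. poly_over F p \<Longrightarrow> x = poly p b \<Longrightarrow> P) \<Longrightarrow> P"
  unfolding poly_values_def by blast

lemma poly_values_mono: "K \<subseteq> F \<Longrightarrow> poly_values K b \<subseteq> poly_values F b"
  unfolding poly_values_def using poly_over_mono by blast

context
  fixes F :: "'a::field set"
  assumes F: "is_subfield F"
begin

lemma poly_values_subset_subfield:
  "is_subfield M \<Longrightarrow> F \<subseteq> M \<Longrightarrow> b \<in> M \<Longrightarrow> poly_values F b \<subseteq> M"
  unfolding poly_values_def using poly_in_subfield[OF F, of M] by blast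

lemma poly_values_add: "x \<in> poly_values F b \<Longrightarrow> y \<in> poly_values F b \<Longrightarrow> x + y \<in> poly_values F b"
  and poly_values_mult: "x \<in> poly_values F b \<Longrightarrow> y \<in> poly_values F b \<Longrightarrow> x * y \<in> poly_values F b"
  and poly_values_uminus: "x \<in> poly_values F b \<Longrightarrow> - x \<in> poly_values F b"
  by (auto elim!: poly_valuesE intro!: poly_valuesI[of _ "_ + _", simplified]
      poly_valuesI[of _ "_ * _", simplified] poly_valuesI[of _ "- _", simplified]
      poly_over_add[OF F] poly_over_mult[OF F] poly_over_uminus[OF F])

lemma poly_values_base: "F \<subseteq> poly_values F b"
  using poly_valuesI[OF poly_over_const[OF F], of _ b] by auto

lemma poly_values_gen: "b \<in> poly_values F b"
  using poly_valuesI[of F "[:0, 1:]" b] F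
  by (simp add: poly_over_pCons_iff poly_over_0[OF F] subfield_0 subfield_1)

lemma poly_values_subset_span_powers:
  assumes "is_minpoly F b h"
  shows "poly_values F b \<subseteq> span_over F ((\<lambda>i. b ^ i) ` {..<degree h})"
proof
  fix x assume "x \<in> poly_values F b"
  then obtain p where p: "poly_over F p" "x = poly p b" by (elim poly_valuesE)
  obtain q r where r: "poly_over F r" "poly r b = poly p b" "r = 0 \<or> degree r < degree h"
    using minpoly_remainder[OF F assms p(1)] by blast
  have "poly r b \<in> span_over F ((\<lambda>i. b ^ i) ` {..<degree h})"
  proof (cases "r = 0")
    case False
    have "poly r b = (\<Sum>i\<le>degree r. coeff r i * b ^ i)" by (rule poly_altdef)
    also have "\<dots> \<in> span_over F ((\<lambda>i. b ^ i) ` {..<degree h})"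
      using r(1,3) False by (intro span_over_lincomb[OF F] span_over_base[OF F])
        (auto simp: poly_over_def)
    finally show ?thesis .
  qed (simp add: span_over_0)
  then show "x \<in> span_over F ((\<lambda>i. b ^ i) ` {..<degree h})" using p r(2) by simp
qed

lemma subfield_poly_values:
  assumes alg: "algebraic_over F b"
  shows "is_subfield (poly_values F b)"
  unfolding is_subfield_def
proof (intro conjI ballI)
  show "0 \<in> poly_values F b" "1 \<in> poly_values F b"
    using poly_values_base subfield_0[OF F] subfield_1[OF F] by blast+
next
  fix x y assume "x \<in> poly_values F b" "y \<in> poly_values F b"
  then show "x + y \<in> poly_values F b" "x * y \<in> poly_values F b"
    by (simp_all add: poly_values_add poly_values_mult)
next
  fix x assume x: "x \<in> poly_values F b"
  then show "- x \<in> poly_values F b" by (rule poly_values_uminus)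
  show "inverse x \<in> poly_values F b"
  proof (cases "x = 0")
    case True
    then show ?thesis using x by simp
  next
    case False
    obtain h where h: "is_minpoly F b h" using minpoly_exists[OF F alg] by blast
    have "algebraic_over F x"
      using poly_values_subset_span_powers[OF h] poly_values_base subfield_1[OF F] x
      by (intro algebraic_over_if_in_finite_span_ring[OF F, of _ "poly_values F b"])
        (auto intro: poly_values_mult)
    then obtain r where r: "poly_over F r" "inverse x = poly r x"
      using inverse_eq_poly_if_algebraic[OF F _ False] by blast
    from x obtain p where p: "poly_over F p" "x = poly p b" by (elim poly_valuesE)
    have "inverse x = poly (pcompose r p) b" using r(2) p(2) by (simp add: poly_pcompose)
    then show ?thesis using poly_over_pcompose[OF F r(1) p(1)] by (simp add: poly_valuesI)
  qed
qed

lemma adjoin_singleton_eq_poly_values: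
  assumes "algebraic_over F b"
  shows "adjoin F {b} = poly_values F b"
proof (rule subset_antisym)
  show "adjoin F {b} \<subseteq> poly_values F b"
    using poly_values_base poly_values_gen
    by (intro adjoin_minimal subfield_poly_values assms) auto
  show "poly_values F b \<subseteq> adjoin F {b}"
    using adjoin_gens_subset[of "{b}" F]
    by (intro poly_values_subset_subfield subfield_adjoin adjoin_base_subset) auto
qed

lemma adjoin_singleton_eq_span_powers:
  assumes h: "is_minpoly F b h" and alg: "algebraic_over F b"
  shows "adjoin F {b} = span_over F ((\<lambda>i. b ^ i) ` {..<degree h})"
proof (rule subset_antisym)
  show "adjoin F {b} \<subseteq> span_over F ((\<lambda>i. b ^ i) ` {..<degree h})"
    using poly_values_subset_span_powers[OF h] adjoin_singleton_eq_poly_values[OF alg] by simp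
  have "(\<lambda>i. b ^ i) ` {..<degree h} \<subseteq> adjoin F {b}"
    using subfield_power[OF subfield_adjoin] adjoin_gens_subset by blast
  then show "span_over F ((\<lambda>i. b ^ i) ` {..<degree h}) \<subseteq> adjoin F {b}"
    by (intro span_over_subset_subfield subfield_adjoin adjoin_base_subset)
qed

lemma finite_ext_refl: "finite_ext F F"
proof -
  have "span_over F {1} = F"
    using span_over_contains_field[OF F, of "{1}"] span_over_subset_subfield[OF F order_refl, of "{1}"]
      subfield_1[OF F] by auto
  then show ?thesis
    unfolding finite_ext_def using subfield_1[OF F] by (intro conjI exI[of _ "{1}"]) auto
qed

lemma finite_ext_adjoin_singleton:
  assumes alg: "algebraic_over F b"
  shows "finite_ext F (adjoin F {b})"
proof -
  obtain h where h: "is_minpoly F b h" using minpoly_exists[OF F alg] by blast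
  let ?P = "(\<lambda>i. b ^ i) ` {..<degree h}"
  have span: "span_over F ?P = adjoin F {b}"
    using adjoin_singleton_eq_span_powers[OF h alg] by simp
  moreover have "?P \<subseteq> adjoin F {b}"
    using span span_over_superset[OF F, of ?P] by simp
  moreover have "finite ?P" by simp
  ultimately show ?thesis
    unfolding finite_ext_def using adjoin_base_subset by blast
qed

lemma finite_ext_trans:
  assumes M: "is_subfield M" and N: "is_subfield N"
    and FM: "finite_ext F M" and MN: "finite_ext M N"
  shows "finite_ext F N"
proof -
  from FM MN obtain P X where P: "finite P" "P \<subseteq> M" "span_over F P = M" and
    X: "finite X" "X \<subseteq> N" "span_over M X = N" and sub: "F \<subseteq> M" "M \<subseteq> N"
    unfolding finite_ext_def by blast
  define Q where "Q = (\<lambda>(p, x). p * x) ` (P \<times> X)"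
  have scale: "a * x \<in> span_over F Q" if "a \<in> M" "x \<in> X" for a x
  proof -
    from that P(3) obtain T c where T: "finite T" "T \<subseteq> P" "\<forall>t\<in>T. c t \<in> F"
      and a: "a = (\<Sum>t\<in>T. c t * t)"
      unfolding span_over_def by blast
    have "a * x = (\<Sum>t\<in>T. c t * (t * x))" by (simp add: a sum_distrib_right mult.assoc)
    also have "\<dots> \<in> span_over F Q"
      using T that(2) by (intro span_over_lincomb[OF F] span_over_base[OF F]) (auto simp: Q_def)
    finally show ?thesis .
  qed
  have "P \<subseteq> N" using P(2) sub(2) by blast
  then have Q_N: "Q \<subseteq> N"
    using X(2) unfolding Q_def by (auto intro!: subfield_mult[OF N])
  have "span_over F Q = N"
  proof (rule subset_antisym)
    show "span_over F Q \<subseteq> N"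
      using sub Q_N by (intro span_over_subset_subfield[OF N]) auto
    show "N \<subseteq> span_over F Q"
    proof
      fix v assume "v \<in> N"
      then show "v \<in> span_over F Q"
        unfolding X(3)[symmetric]
        by (rule span_over_induct) (auto intro: span_over_0 span_over_add[OF F] scale)
    qed
  qed
  moreover have "finite Q" using P(1) X(1) by (simp add: Q_def)
  ultimately show ?thesis
    unfolding finite_ext_def using sub Q_N by (intro conjI exI[of _ Q]) auto
qed

lemma finite_ext_subset_alg_closure_in:
  assumes L: "is_subfield L" and FL: "finite_ext F L"
  shows "L \<subseteq> alg_closure_in F"
proof
  fix x assume "x \<in> L"
  moreover from FL obtain S where "finite S" "span_over F S = L"
    unfolding finite_ext_def by blast
  ultimately have "algebraic_over F x"
    using L by (intro algebraic_over_if_in_finite_span_ring[OF F, of S L])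
      (auto intro: subfield_1 subfield_mult)
  then show "x \<in> alg_closure_in F" by (simp add: alg_closure_in_def)
qed

lemma alg_closure_in_base: "F \<subseteq> alg_closure_in F"
  unfolding alg_closure_in_def using algebraic_over_mem[OF F] by blast

end

lemma finite_ext_adjoin_finite:
  assumes F: "is_subfield F" and "finite C" "\<And>c. c \<in> C \<Longrightarrow> algebraic_over F c"
  shows "finite_ext F (adjoin F C)"
  using assms(2,3)
proof (induction C rule: finite_induct)
  case empty
  then show ?case using finite_ext_refl[OF F] by (simp add: adjoin_empty[OF F])
next
  case (insert c C)
  then have FC: "finite_ext F (adjoin F C)" by simp
  have "algebraic_over (adjoin F C) c"
    using insert.prems[of c] algebraic_over_mono[OF adjoin_base_subset] by simp
  then have "finite_ext (adjoin F C) (adjoin (adjoin F C) {c})"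
    by (rule finite_ext_adjoin_singleton[OF subfield_adjoin])
  then have "finite_ext F (adjoin (adjoin F C) {c})"
    by (rule finite_ext_trans[OF F subfield_adjoin subfield_adjoin FC])
  then show ?case by (simp add: adjoin_adjoin)
qed

lemma subfield_alg_closure_in:
  assumes F: "is_subfield F"
  shows "is_subfield (alg_closure_in F)"
proof -
  let ?A = "alg_closure_in F"
  have "x + y \<in> ?A \<and> x * y \<in> ?A \<and> - x \<in> ?A \<and> inverse x \<in> ?A" if "x \<in> ?A" "y \<in> ?A" for x y
  proof -
    let ?N = "adjoin F {x, y}"
    have "finite_ext F ?N"
      using that by (intro finite_ext_adjoin_finite[OF F]) (auto simp: alg_closure_in_def)
    then have "?N \<subseteq> ?A" by (rule finite_ext_subset_alg_closure_in[OF F subfield_adjoin])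
    moreover have "x \<in> ?N" "y \<in> ?N" using adjoin_gens_subset[of "{x, y}" F] by auto
    ultimately show ?thesis
      using subfield_adjoin by (blast intro: subfield_add subfield_mult subfield_uminus subfield_inverse)
  qed
  then show ?thesis
    unfolding is_subfield_def using alg_closure_in_base[OF F] subfield_0[OF F] subfield_1[OF F] by blast
qed

lemma algebraic_over_alg_closure_in:
  assumes F: "is_subfield F" and y: "algebraic_over (alg_closure_in F) y"
  shows "algebraic_over F y"
proof -
  from y obtain q where q: "q \<noteq> 0" "poly_over (alg_closure_in F) q" "poly q y = 0"
    unfolding algebraic_over_poly_over by blast
  define M where "M = adjoin F (coeff q ` {..degree q})"
  have "algebraic_over F c" if "c \<in> coeff q ` {..degree q}" for c
    using that q(2) by (auto simp: poly_over_def alg_closure_in_def)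
  then have FM: "finite_ext F M"
    unfolding M_def by (intro finite_ext_adjoin_finite[OF F]) auto
  have "coeff q i \<in> M" for i
  proof (cases "i \<le> degree q")
    case True
    then have "coeff q i \<in> coeff q ` {..degree q}" by simp
    then show ?thesis unfolding M_def by (rule subsetD[OF adjoin_gens_subset])
  qed (simp add: M_def coeff_eq_0 subfield_0[OF subfield_adjoin])
  then have "algebraic_over M y"
    using q(1,3) unfolding algebraic_over_poly_over poly_over_def by blast
  then have "finite_ext M (adjoin M {y})"
    unfolding M_def by (rule finite_ext_adjoin_singleton[OF subfield_adjoin])
  then have "finite_ext F (adjoin M {y})"
    unfolding M_def by (rule finite_ext_trans[OF F subfield_adjoin subfield_adjoin FM[unfolded M_def]])
  then have "adjoin M {y} \<subseteq> alg_closure_in F"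
    by (rule finite_ext_subset_alg_closure_in[OF F subfield_adjoin])
  moreover have "y \<in> adjoin M {y}" by (rule subsetD[OF adjoin_gens_subset]) simp
  ultimately show ?thesis by (auto simp: alg_closure_in_def)
qed
section \<open>Essential dimension of simple extensions\<close>

lemma monic_splits:
  fixes h :: "'a::field poly"
  assumes ac: "\<forall>p::'a poly. degree p > 0 \<longrightarrow> (\<exists>x. poly p x = 0)"
  shows "lead_coeff h = 1 \<Longrightarrow> \<exists>rs. h = (\<Prod>r\<leftarrow>rs. [:-r, 1:])"
proof (induction "degree h" arbitrary: h)
  case 0
  then have "h = [:1:]" using degree_0_id[of h] by simp
  then show ?case by (intro exI[of _ "[]"]) (simp add: one_pCons)
next
  case (Suc m)
  then obtain x where "poly h x = 0" using ac by (metis zero_less_Suc)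
  then obtain q where q: "h = [:-x, 1:] * q" by (auto simp: poly_eq_0_iff_dvd elim: dvdE)
  have lc: "lead_coeff q = 1" using Suc.prems unfolding q lead_coeff_mult by simp
  then have "q \<noteq> 0" by auto
  then have "degree h = Suc (degree q)" unfolding q by (subst degree_mult_eq) auto
  then have "m = degree q" using Suc.hyps(2) by simp
  then obtain rs where "q = (\<Prod>r\<leftarrow>rs. [:-r, 1:])" using Suc.hyps(1) lc by blast
  then show ?case using q by (intro exI[of _ "x # rs"]) simp
qed

text \<open>\<open>h\<close> divides a polynomial over \<open>A\<close> and splits into linear factors, so its roots, and
  hence its coefficients, are algebraic over \<open>A\<close>.\<close>

lemma minpoly_poly_over_alg_closure_in:
  assumes ac: "\<forall>p::'a poly. degree p > 0 \<longrightarrow> (\<exists>x. poly p x = 0)"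
    and F: "is_subfield F" and A: "is_subfield A" "A \<subseteq> F"
    and h: "is_minpoly F b h" and alg: "algebraic_over A (b::'a::field)"
  shows "poly_over (alg_closure_in A) h"
proof -
  from alg obtain g where g: "g \<noteq> 0" "poly_over A g" "poly g b = 0"
    unfolding algebraic_over_poly_over by blast
  have "h dvd g" using minpoly_dvd[OF F h poly_over_mono[OF A(2) g(2)] g(3)] .
  have "lead_coeff h = 1" using h by (simp add: is_minpoly_def)
  with monic_splits[OF ac] obtain rs where rs: "h = (\<Prod>r\<leftarrow>rs. [:-r, 1:])" by blast
  have "r \<in> alg_closure_in A" if "r \<in> set rs" for r
  proof -
    have "poly h r = 0" unfolding rs using that by (induction rs) auto
    then have "poly g r = 0" using \<open>h dvd g\<close> by (auto elim: dvdE)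
    then show ?thesis using g(1,2) by (auto simp: alg_closure_in_def algebraic_over_poly_over)
  qed
  then show ?thesis
    unfolding rs by (intro poly_over_prod_linear subfield_alg_closure_in[OF A(1)]) auto
qed

text \<open>Extend \<open>T\<close> to a \<open>K\<close>-basis \<open>B\<close> of the \<open>K\<close>-span of \<open>T \<union> P\<close>. Then \<open>card B \<le> card P\<close>, while \<open>B\<close>
  spans \<open>P\<close> over \<open>F\<close>; an \<open>F\<close>-dependence in \<open>B\<close> would contradict Steinitz.\<close>

lemma lin_indep_over_extend_scalars:
  assumes K: "is_subfield K" and F: "is_subfield F" and KF: "K \<subseteq> F"
    and P: "finite P" "lin_indep_over F P"
    and TP: "T \<subseteq> span_over K P" and T: "lin_indep_over K T"
  shows "lin_indep_over F T"
proof -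
  have span: "T \<union> P \<subseteq> span_over K P" using TP span_over_superset[OF K] by blast
  have bound: "finite V \<and> card V \<le> card P" if "V \<subseteq> T \<union> P" "lin_indep_over K V" for V
    using lin_indep_over_card_le[OF K P(1) _ that(2)] that(1) span by blast
  obtain B where B: "T \<subseteq> B" "B \<subseteq> T \<union> P" "lin_indep_over K B" "finite B" "T \<union> P \<subseteq> span_over K B"
    by (rule lin_indep_over_extend[OF K _ T bound, of "T \<union> P"]) auto
  have card_B: "card B \<le> card P" using bound[OF B(2,3)] by simp
  have P_span: "P \<subseteq> span_over F B" using B(5) span_over_field_mono[OF KF] by blast
  have "lin_indep_over F B"
  proof (rule ccontr)
    assume "\<not> lin_indep_over F B"
    then obtain t where t: "t \<in> B" "t \<in> span_over F (B - {t})"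
      by (rule not_lin_indep_over_in_span[OF F])
    then have "B \<subseteq> span_over F (B - {t})"
      using span_over_base[OF F, of _ "B - {t}"] by blast
    then have "P \<subseteq> span_over F (B - {t})"
      using P_span span_over_subset_span[OF F] by blast
    then have "card P \<le> card (B - {t})"
      using lin_indep_over_card_le[OF F _ _ P(2)] B(4) by blast
    with card_B t(1) B(4) show False
      by (metis card_Diff1_less leD le_less_trans)
  qed
  then show ?thesis using B(1) by (rule lin_indep_over_subset)
qed

lemma descends_adjoin_singleton:
  assumes K: "is_subfield K" and F: "is_subfield F" and KF: "K \<subseteq> F"
    and h: "is_minpoly F b h" and hK: "poly_over K h"
  shows "descends F (adjoin F {b}) K"
proof -
  let ?P = "(\<lambda>i. b ^ i) ` {..<degree h}"
  let ?B = "poly_values K b"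
  have hK': "is_minpoly K b h" by (rule is_minpoly_subfield[OF h KF hK])
  have "h \<noteq> 0" "poly h b = 0" using h by (auto simp: is_minpoly_def)
  then have algK: "algebraic_over K b" and algF: "algebraic_over F b"
    using hK poly_over_mono[OF KF hK] unfolding algebraic_over_poly_over by blast+
  have B_eq: "?B = span_over K ?P"
    using adjoin_singleton_eq_poly_values[OF K algK] adjoin_singleton_eq_span_powers[OF K hK' algK]
    by simp
  have F_eq: "adjoin F {b} = span_over F ?P" by (rule adjoin_singleton_eq_span_powers[OF F h algF])
  have BF: "?B \<subseteq> adjoin F {b}"
    using poly_values_mono[OF KF] adjoin_singleton_eq_poly_values[OF F algF] by blast
  have PB: "?P \<subseteq> ?B" unfolding B_eq by (rule span_over_superset[OF K])
  show ?thesis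
    unfolding descends_def
  proof (intro exI[of _ ?B] conjI allI impI)
    show "K \<subseteq> ?B" by (rule poly_values_base[OF K])
    show "?B \<subseteq> adjoin F {b}" by (rule BF)
    show "\<forall>x\<in>?B. \<forall>y\<in>?B. x + y \<in> ?B \<and> x * y \<in> ?B \<and> - x \<in> ?B"
      by (simp add: poly_values_add[OF K] poly_values_mult[OF K] poly_values_uminus[OF K])
    show "span_over F ?B = adjoin F {b}"
    proof (rule subset_antisym)
      show "span_over F ?B \<subseteq> adjoin F {b}"
        by (rule span_over_subset_subfield[OF subfield_adjoin adjoin_base_subset BF])
      show "adjoin F {b} \<subseteq> span_over F ?B"
        unfolding F_eq by (rule span_over_mono[OF PB])
    qed
  next
    fix T assume T: "T \<subseteq> ?B \<and> lin_indep_over K T"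
    show "lin_indep_over F T"
    proof (rule lin_indep_over_extend_scalars[OF K F KF _ minpoly_powers_lin_indep(2)[OF F h]])
      show "T \<subseteq> span_over K ?P" using T unfolding B_eq by blast
      show "lin_indep_over K T" using T by blast
    qed simp
  qed
qed

definition level_step :: "'a::field set \<Rightarrow> nat \<Rightarrow> 'a set \<Rightarrow> 'a \<Rightarrow> bool" where
  "level_step k d F b \<longleftrightarrow> (\<exists>S. S \<subseteq> F \<and> finite S \<and> card S \<le> d \<and> alg_indep k S \<and>
      algebraic_over (adjoin k S) b)"

lemma level_step_mono: "F \<subseteq> F' \<Longrightarrow> d \<le> n \<Longrightarrow> level_step k d F b \<Longrightarrow> level_step k n F' b"
  unfolding level_step_def by (meson order_trans)

lemma level_step_algebraic:
  "k \<subseteq> F \<Longrightarrow> is_subfield F \<Longrightarrow> level_step k d F b \<Longrightarrow> algebraic_over F b"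
  unfolding level_step_def by (meson adjoin_minimal algebraic_over_mono)

text \<open>The descent field is \<open>F \<inter> alg_closure_in (k(S))\<close>: it contains the coefficients of the
  minimal polynomial of \<open>b\<close> over \<open>F\<close>, and \<open>S\<close> is a transcendence basis of it over \<open>k\<close>.\<close>

lemma ed_le_adjoin_singleton:
  assumes ac: "\<forall>p::'a poly. degree p > 0 \<longrightarrow> (\<exists>x. poly p x = 0)"
    and F: "is_subfield F" and k: "k \<subseteq> F"
    and step: "level_step k d F (b::'a::field)"
  shows "ed_le k F (adjoin F {b}) d"
proof -
  from step obtain S where S: "S \<subseteq> F" "finite S" "card S \<le> d" "alg_indep k S"
    "algebraic_over (adjoin k S) b" unfolding level_step_def by blast
  define K0 where "K0 = F \<inter> alg_closure_in (adjoin k S)"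
  have kS: "adjoin k S \<subseteq> F" by (rule adjoin_minimal[OF F k S(1)])
  have K0: "is_subfield K0" "K0 \<subseteq> F"
    unfolding K0_def by (auto intro: subfield_Int[OF F] subfield_alg_closure_in[OF subfield_adjoin])
  have kS_K0: "adjoin k S \<subseteq> K0"
    unfolding K0_def using kS alg_closure_in_base[OF subfield_adjoin] by blast
  have "algebraic_over F b" using level_step_algebraic[OF k F step] .
  then obtain h where h: "is_minpoly F b h" by (rule minpoly_exists[OF F])
  have "poly_over K0 h"
    using minpoly_poly_over_alg_closure_in[OF ac F subfield_adjoin kS h S(5)] h
    unfolding K0_def is_minpoly_def poly_over_def by blast
  then have "descends F (adjoin F {b}) K0"
    by (rule descends_adjoin_singleton[OF K0(1) F K0(2) h])
  moreover have "trdeg_le k K0 d"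
    unfolding trdeg_le_def using S kS_K0 adjoin_gens_subset[of S k]
    by (intro exI[of _ S]) (auto simp: K0_def alg_closure_in_def)
  moreover have "k \<subseteq> K0" using kS_K0 adjoin_base_subset[of k S] by blast
  ultimately show ?thesis unfolding ed_le_def using K0 by blast
qed

text \<open>Conversely, an extension of essential dimension at most \<open>d\<close> is generated by a \<open>K0\<close>-basis
  of its descended algebra, whose elements are algebraic over \<open>K0\<close> and hence over \<open>k(S)\<close>.\<close>

lemma ed_le_imp_level_steps:
  assumes G: "is_subfield G"
    and GA: "finite_ext G A" and ed: "ed_le k G A d"
  obtains T where "finite T" "A \<subseteq> adjoin G T" "\<And>t. t \<in> T \<Longrightarrow> level_step k d G t"
proof -
  from ed obtain K0 where K0: "is_subfield K0" "K0 \<subseteq> G" "descends G A K0" "trdeg_le k K0 d"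
    unfolding ed_le_def by blast
  from K0(3) obtain B where B: "K0 \<subseteq> B" "B \<subseteq> A" "\<forall>x\<in>B. \<forall>y\<in>B. x * y \<in> B"
    "span_over G B = A" "\<forall>T. T \<subseteq> B \<and> lin_indep_over K0 T \<longrightarrow> lin_indep_over G T"
    unfolding descends_def by blast
  from K0(4) obtain S where S: "S \<subseteq> K0" "alg_indep k S" "\<forall>x\<in>K0. algebraic_over (adjoin k S) x"
    "finite S" "card S \<le> d" unfolding trdeg_le_def by blast
  from GA obtain SA where SA: "finite SA" "span_over G SA = A" unfolding finite_ext_def by blast
  have bound: "finite V \<and> card V \<le> card SA" if "V \<subseteq> B" "lin_indep_over K0 V" for V
  proof (rule lin_indep_over_card_le[OF G SA(1)])
    show "V \<subseteq> span_over G SA" unfolding SA(2) using that(1) B(2) by blast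
    show "lin_indep_over G V" using B(5) that by blast
  qed
  obtain T where T: "T \<subseteq> B" "finite T" "B \<subseteq> span_over K0 T"
    by (rule lin_indep_over_extend[OF K0(1) _ lin_indep_over_empty bound, of B]) auto
  have "level_step k d G t" if t: "t \<in> T" for t
  proof -
    have "algebraic_over K0 t"
      using B(1,3) T t subfield_1[OF K0(1)]
      by (intro algebraic_over_if_in_finite_span_ring[OF K0(1) T(2) T(3)]) auto
    moreover have "K0 \<subseteq> alg_closure_in (adjoin k S)" using S(3) by (auto simp: alg_closure_in_def)
    ultimately have "algebraic_over (adjoin k S) t"
      by (meson algebraic_over_mono algebraic_over_alg_closure_in subfield_adjoin)
    then show ?thesis unfolding level_step_def using S K0(2) by blast
  qed
  moreover have "A \<subseteq> adjoin G T"
  proof -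
    have "B \<subseteq> span_over G T" using T(3) span_over_field_mono[OF K0(2)] by blast
    then have "A \<subseteq> span_over G T" using B(4) span_over_subset_span[OF G] by blast
    also have "\<dots> \<subseteq> adjoin G T"
      by (rule span_over_subset_subfield[OF subfield_adjoin adjoin_base_subset adjoin_gens_subset])
    finally show ?thesis .
  qed
  ultimately show ?thesis using T(2) that by blast
qed

section \<open>Towers of simple steps\<close>

text \<open>A tower \<open>F = K\<^sub>0 \<subseteq> \<dots> \<subseteq> K\<^sub>m\<close> with \<open>K\<^sub>i\<^sub>+\<^sub>1 = K\<^sub>i(b\<^sub>i)\<close> is encoded by the list of the \<open>b\<^sub>i\<close>;
  its top field is \<open>adjoin F (set bs)\<close>.\<close>

fun level_tower :: "'a::field set \<Rightarrow> nat \<Rightarrow> 'a set \<Rightarrow> 'a list \<Rightarrow> bool" where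
  "level_tower k d F [] \<longleftrightarrow> True"
| "level_tower k d F (b # bs) \<longleftrightarrow> level_step k d F b \<and> level_tower k d (adjoin F {b}) bs"

lemma adjoin_Cons: "adjoin (adjoin F {b}) (set bs) = adjoin F (set (b # bs))"
  by (simp add: adjoin_adjoin)

lemma level_tower_mono:
  "F \<subseteq> F' \<Longrightarrow> d \<le> n \<Longrightarrow> level_tower k d F bs \<Longrightarrow> level_tower k n F' bs"
proof (induction bs arbitrary: F F')
  case (Cons b bs)
  then show ?case using adjoin_mono[of F F' "{b}" "{b}"] level_step_mono by auto
qed simp

lemma level_tower_of_steps:
  "(\<And>b. b \<in> set bs \<Longrightarrow> level_step k d F b) \<Longrightarrow> level_tower k d F bs"
proof (induction bs arbitrary: F)
  case (Cons b bs)
  have "level_step k d (adjoin F {b}) b'" if "b' \<in> set bs" for b'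
    by (rule level_step_mono[OF adjoin_base_subset le_refl]) (use Cons.prems that in simp)
  with Cons show ?case by simp
qed simp

lemma level_tower_append:
  assumes "is_subfield F"
  shows "level_tower k d F (xs @ ys) \<longleftrightarrow>
    level_tower k d F xs \<and> level_tower k d (adjoin F (set xs)) ys"
  using assms
proof (induction xs arbitrary: F)
  case Nil
  then show ?case by (simp add: adjoin_empty)
next
  case (Cons x xs)
  then show ?case by (simp add: subfield_adjoin adjoin_Cons)
qed

lemma level_tower_nth:
  "level_tower k d F bs \<Longrightarrow> i < length bs \<Longrightarrow> is_subfield F \<Longrightarrow>
    level_step k d (adjoin F (set (take i bs))) (bs ! i)"
proof (induction bs arbitrary: F i)
  case (Cons b bs)
  show ?case
  proof (cases i)
    case 0
    then show ?thesis using Cons.prems by (simp add: adjoin_empty)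
  next
    case (Suc j)
    then have "level_step k d (adjoin (adjoin F {b}) (set (take j bs))) (bs ! j)"
      using Cons by (intro Cons.IH) (auto simp: subfield_adjoin)
    then show ?thesis using Suc by (simp add: adjoin_adjoin)
  qed
qed simp

lemma level_tower_finite_ext:
  assumes "is_subfield F" "k \<subseteq> F"
  shows "level_tower k d F bs \<Longrightarrow> finite_ext F (adjoin F (set bs))"
  using assms
proof (induction bs arbitrary: F)
  case Nil
  then show ?case by (simp add: adjoin_empty finite_ext_refl)
next
  case (Cons b bs)
  then have "finite_ext F (adjoin F {b})"
    by (intro finite_ext_adjoin_singleton level_step_algebraic) auto
  moreover have "finite_ext (adjoin F {b}) (adjoin (adjoin F {b}) (set bs))"
    using Cons.IH[of "adjoin F {b}"] Cons.prems adjoin_base_subset[of F "{b}"]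
    by (simp add: subfield_adjoin)
  ultimately show ?case
    unfolding adjoin_Cons[symmetric]
    by (rule finite_ext_trans[OF Cons.prems(2) subfield_adjoin subfield_adjoin])
qed

lemma lev_le_level_tower:
  assumes ac: "\<forall>p::'a poly. degree p > 0 \<longrightarrow> (\<exists>x. poly p x = 0)"
    and F: "is_subfield F" and k: "k \<subseteq> F"
    and tower: "level_tower k d F (bs :: 'a::field list)"
  shows "lev_le k F (adjoin F (set bs)) d"
  unfolding lev_le_def
proof (intro exI[of _ "length bs"] exI[of _ "\<lambda>i. adjoin F (set (take i bs))"] conjI allI impI)
  show "adjoin F (set (take 0 bs)) = F" by (simp add: adjoin_empty[OF F])
  show "adjoin F (set bs) \<subseteq> adjoin F (set (take (length bs) bs))" by simp
  fix i assume i: "i < length bs"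
  let ?G = "adjoin F (set (take i bs))"
  have G: "is_subfield ?G" "k \<subseteq> ?G" using k adjoin_base_subset by (auto simp: subfield_adjoin)
  have step: "level_step k d ?G (bs ! i)" by (rule level_tower_nth[OF tower i F])
  have eq: "adjoin F (set (take (Suc i) bs)) = adjoin ?G {bs ! i}"
    using i by (simp add: take_Suc_conv_app_nth adjoin_adjoin)
  show "is_subfield (adjoin F (set (take (Suc i) bs)))" by (rule subfield_adjoin)
  show "finite_ext ?G (adjoin F (set (take (Suc i) bs)))"
    unfolding eq using G step by (intro finite_ext_adjoin_singleton level_step_algebraic)
  show "ed_le k ?G (adjoin F (set (take (Suc i) bs))) d"
    unfolding eq by (rule ed_le_adjoin_singleton[OF ac G step])
qed

lemma level_tower_of_lev_le:
  assumes F: "is_subfield F" and lev: "lev_le k F L d"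
  obtains bs where "level_tower k d F bs" "L \<subseteq> adjoin F (set bs)"
proof -
  from lev obtain m Ks where Ks: "Ks 0 = F" "L \<subseteq> Ks m"
    "\<And>i. i < m \<Longrightarrow> is_subfield (Ks (Suc i)) \<and> finite_ext (Ks i) (Ks (Suc i)) \<and>
        ed_le k (Ks i) (Ks (Suc i)) d"
    unfolding lev_le_def by blast
  have "i \<le> m \<Longrightarrow> is_subfield (Ks i) \<and> (\<exists>bs. level_tower k d F bs \<and> Ks i \<subseteq> adjoin F (set bs))" for i
  proof (induction i)
    case 0
    then show ?case using Ks(1) F by (intro conjI exI[of _ "[]"]) (auto simp: adjoin_empty)
  next
    case (Suc i)
    then obtain bs where bs: "is_subfield (Ks i)" "level_tower k d F bs" "Ks i \<subseteq> adjoin F (set bs)"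
      by auto
    from Ks(3)[of i] Suc.prems obtain T where T: "finite T" "Ks (Suc i) \<subseteq> adjoin (Ks i) T"
      "\<And>t. t \<in> T \<Longrightarrow> level_step k d (Ks i) t"
      using ed_le_imp_level_steps[OF bs(1)] by (metis Suc_le_lessD)
    obtain ts where ts: "set ts = T" using finite_list[OF T(1)] by blast
    have "level_tower k d (adjoin F (set bs)) ts"
      using T(3) ts by (intro level_tower_mono[OF bs(3) le_refl] level_tower_of_steps) auto
    then have "level_tower k d F (bs @ ts)" using bs(2) by (simp add: level_tower_append[OF F])
    moreover have "Ks (Suc i) \<subseteq> adjoin F (set (bs @ ts))"
      using T(2) adjoin_mono[OF bs(3), of T T] ts by (auto simp: adjoin_adjoin)
    ultimately show ?case using Ks(3)[of i] Suc.prems by (metis Suc_le_lessD)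
  qed
  with Ks(2) that show ?thesis by blast
qed

section \<open>Level closure via towers\<close>

definition tower_closure :: "'a::field set \<Rightarrow> nat \<Rightarrow> 'a set \<Rightarrow> 'a set" where
  "tower_closure k d F = {x. \<exists>bs. level_tower k d F bs \<and> x \<in> adjoin F (set bs)}"

lemma tower_closureI: "level_tower k d F bs \<Longrightarrow> x \<in> adjoin F (set bs) \<Longrightarrow> x \<in> tower_closure k d F"
  unfolding tower_closure_def by blast

lemma tower_closureE:
  "x \<in> tower_closure k d F \<Longrightarrow> (\<And>bs. level_tower k d F bs \<Longrightarrow> x \<in> adjoin F (set bs) \<Longrightarrow> P) \<Longrightarrow> P"
  unfolding tower_closure_def by blast

lemma tower_closure_mono:
  "F \<subseteq> E \<Longrightarrow> d \<le> n \<Longrightarrow> tower_closure k d F \<subseteq> tower_closure k n E"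
  by (auto elim!: tower_closureE intro!: tower_closureI
      dest: level_tower_mono adjoin_mono[OF _ order_refl, THEN subsetD])

text \<open>Two towers over \<open>F\<close> both lie below their concatenation.\<close>

lemma tower_closure_finite_subset:
  assumes F: "is_subfield F" and X: "finite X" "X \<subseteq> tower_closure k d F"
  obtains bs where "level_tower k d F bs" "X \<subseteq> adjoin F (set bs)"
proof -
  from X have "\<exists>bs. level_tower k d F bs \<and> X \<subseteq> adjoin F (set bs)"
  proof (induction X rule: finite_induct)
    case empty
    then show ?case by (auto intro: exI[of _ "[]"])
  next
    case (insert x X)
    then obtain xs ys where xs: "level_tower k d F xs" "X \<subseteq> adjoin F (set xs)"
      and ys: "level_tower k d F ys" "x \<in> adjoin F (set ys)"
      by (auto elim: tower_closureE)
    have "level_tower k d (adjoin F (set xs)) ys"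
      using ys(1) by (rule level_tower_mono[OF adjoin_base_subset le_refl])
    then have "level_tower k d F (xs @ ys)" using xs(1) by (simp add: level_tower_append[OF F])
    moreover have "adjoin F (set xs) \<subseteq> adjoin F (set (xs @ ys))" "adjoin F (set ys) \<subseteq> adjoin F (set (xs @ ys))"
      by (rule adjoin_mono; auto)+
    ultimately show ?case using xs(2) ys(2) by blast
  qed
  with that show ?thesis by blast
qed

lemma subfield_tower_closure:
  assumes F: "is_subfield F"
  shows "is_subfield (tower_closure k d F)"
  unfolding is_subfield_def
proof (intro conjI ballI)
  show "0 \<in> tower_closure k d F" "1 \<in> tower_closure k d F"
    using F by (auto intro!: tower_closureI[of k d F "[]"] simp: adjoin_empty subfield_0 subfield_1)
next
  fix x y assume "x \<in> tower_closure k d F" "y \<in> tower_closure k d F"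
  then have "finite {x, y}" "{x, y} \<subseteq> tower_closure k d F" by simp_all
  then obtain bs where "level_tower k d F bs" "{x, y} \<subseteq> adjoin F (set bs)"
    by (rule tower_closure_finite_subset[OF F])
  then show "x + y \<in> tower_closure k d F" "x * y \<in> tower_closure k d F"
    by (auto intro!: tower_closureI subfield_add[OF subfield_adjoin] subfield_mult[OF subfield_adjoin])
next
  fix x assume "x \<in> tower_closure k d F"
  then show "- x \<in> tower_closure k d F" "inverse x \<in> tower_closure k d F"
    by (auto elim!: tower_closureE
        intro: tower_closureI subfield_uminus[OF subfield_adjoin] subfield_inverse[OF subfield_adjoin])
qed

lemma level_closure_eq_tower_closure:
  assumes ac: "\<forall>p::'a poly. degree p > 0 \<longrightarrow> (\<exists>x. poly p x = 0)"
    and F: "is_subfield F" and k: "k \<subseteq> (F::'a::field set)"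
  shows "level_closure k d F = tower_closure k d F"
proof (rule subset_antisym)
  let ?C = "{L. is_subfield L \<and> F \<subseteq> L \<and> L \<subseteq> alg_closure_in F \<and> finite_ext F L \<and> lev_le k F L d}"
  have "\<Union>?C \<subseteq> tower_closure k d F"
  proof
    fix x assume "x \<in> \<Union>?C"
    then obtain L where "lev_le k F L d" "x \<in> L" by blast
    moreover obtain bs where "level_tower k d F bs" "L \<subseteq> adjoin F (set bs)"
      by (rule level_tower_of_lev_le[OF F \<open>lev_le k F L d\<close>])
    ultimately show "x \<in> tower_closure k d F" by (auto intro: tower_closureI)
  qed
  moreover have "F \<subseteq> tower_closure k d F"
    using F by (auto intro: tower_closureI[of k d F "[]"] simp: adjoin_empty)
  ultimately show "level_closure k d F \<subseteq> tower_closure k d F"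
    unfolding level_closure_def by (intro adjoin_minimal subfield_tower_closure[OF F])
  show "tower_closure k d F \<subseteq> level_closure k d F"
  proof
    fix x assume "x \<in> tower_closure k d F"
    then obtain bs where bs: "level_tower k d F bs" "x \<in> adjoin F (set bs)"
      by (elim tower_closureE)
    have "finite_ext F (adjoin F (set bs))" by (rule level_tower_finite_ext[OF F k bs(1)])
    then have "adjoin F (set bs) \<in> ?C"
      using subfield_adjoin adjoin_base_subset finite_ext_subset_alg_closure_in[OF F subfield_adjoin]
        lev_le_level_tower[OF ac F k bs(1)] by blast
    then have "x \<in> \<Union>?C" using bs(2) by blast
    then show "x \<in> level_closure k d F"
      unfolding level_closure_def by (rule subsetD[OF adjoin_gens_subset])
  qed
qed

text \<open>\<open>G\<close> collects the finitely many elements of \<open>E\<close> needed to express the generators of the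
  tower and the transcendence bases of its steps.\<close>

lemma level_tower_descent:
  assumes K: "is_subfield K" and E: "is_subfield E" and KE: "K \<subseteq> E"
  shows "level_tower k d E bs \<Longrightarrow> finite X \<Longrightarrow> X \<subseteq> adjoin E (set bs) \<Longrightarrow>
    \<exists>G. finite G \<and> G \<subseteq> E \<and> level_tower k d (adjoin K G) bs \<and> X \<subseteq> adjoin (adjoin K G) (set bs)"
proof (induction bs arbitrary: X rule: rev_induct)
  case Nil
  have "X \<subseteq> adjoin (adjoin K X) (set [])"
    using adjoin_gens_subset[of X K] by (simp add: adjoin_empty[OF subfield_adjoin])
  moreover have "X \<subseteq> E" using Nil.prems(3) by (simp add: adjoin_empty[OF E])
  ultimately show ?case using Nil.prems(2) by (intro exI[of _ X]) simp
next
  case (snoc b bs)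
  from snoc.prems(1) obtain S where tower: "level_tower k d E bs" and
    S: "S \<subseteq> adjoin E (set bs)" "finite S" "card S \<le> d" "alg_indep k S" "algebraic_over (adjoin k S) b"
    by (auto simp: level_tower_append[OF E] level_step_def)
  obtain G1 where G1: "finite G1" "G1 \<subseteq> E" "X \<subseteq> adjoin K (G1 \<union> set (bs @ [b]))"
    using adjoin_finite_base[OF K KE snoc.prems(2,3)] by blast
  obtain G2 where G2: "finite G2" "G2 \<subseteq> E" "level_tower k d (adjoin K G2) bs"
    "S \<subseteq> adjoin (adjoin K G2) (set bs)"
    using snoc.IH[OF tower S(2,1)] by blast
  let ?F = "adjoin K (G1 \<union> G2)"
  have mono: "adjoin (adjoin K G2) (set bs) \<subseteq> adjoin ?F (set bs)"
    by (intro adjoin_mono) auto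
  have "adjoin K G2 \<subseteq> ?F" by (rule adjoin_mono) auto
  then have "level_tower k d ?F bs" by (rule level_tower_mono[OF _ le_refl G2(3)])
  moreover have "level_step k d (adjoin ?F (set bs)) b"
    unfolding level_step_def using S G2(4) mono by blast
  ultimately have "level_tower k d ?F (bs @ [b])" by (simp add: level_tower_append[OF subfield_adjoin])
  moreover have "X \<subseteq> adjoin ?F (set (bs @ [b]))"
    using G1(3) adjoin_mono[of K K "G1 \<union> set (bs @ [b])" "G1 \<union> G2 \<union> set (bs @ [b])"]
    by (auto simp: adjoin_adjoin)
  ultimately show ?case using G1(1,2) G2(1,2) by (intro exI[of _ "G1 \<union> G2"]) auto
qed

section \<open>Properties of the level closure\<close>

context
  fixes k :: "'a::field set"
  assumes ac: "\<forall>p::'a poly. degree p > 0 \<longrightarrow> (\<exists>x. poly p x = 0)"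
begin

lemma level_closure_mono:
  assumes "is_subfield F" "is_subfield E" "k \<subseteq> F" "F \<subseteq> E" "d \<le> n"
  shows "level_closure k d F \<subseteq> level_closure k n E"
  using assms tower_closure_mono[of F E d n k]
  by (simp add: level_closure_eq_tower_closure[OF ac])

lemma lev_le_iff_subset_level_closure:
  assumes K: "is_subfield K" "k \<subseteq> K"
    and L: "is_subfield L" "L \<subseteq> alg_closure_in K" "finite_ext K L"
  shows "lev_le k K L d \<longleftrightarrow> L \<subseteq> level_closure k d K"
proof
  assume "lev_le k K L d"
  with L have "L \<subseteq> \<Union>{L. is_subfield L \<and> K \<subseteq> L \<and> L \<subseteq> alg_closure_in K \<and> finite_ext K L \<and> lev_le k K L d}"
    by (auto simp: finite_ext_def)
  then show "L \<subseteq> level_closure k d K"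
    unfolding level_closure_def using adjoin_gens_subset by (rule order_trans)
next
  assume L_sub: "L \<subseteq> level_closure k d K"
  from L(3) obtain S where S: "finite S" "S \<subseteq> L" "span_over K S = L"
    unfolding finite_ext_def by blast
  have "S \<subseteq> tower_closure k d K"
    using S(2) L_sub level_closure_eq_tower_closure[OF ac K(1) K(2)] by blast
  then obtain bs where bs: "level_tower k d K bs" "S \<subseteq> adjoin K (set bs)"
    by (rule tower_closure_finite_subset[OF K(1) S(1)])
  have "L \<subseteq> adjoin K (set bs)"
    unfolding S(3)[symmetric] by (rule span_over_subset_subfield[OF subfield_adjoin adjoin_base_subset bs(2)])
  moreover have "lev_le k K (adjoin K (set bs)) d" by (rule lev_le_level_tower[OF ac K(1) K(2) bs(1)])
  ultimately show "lev_le k K L d" unfolding lev_le_def by blast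
qed

lemma level_closure_eq_if_lev_le:
  assumes K: "is_subfield K" "k \<subseteq> K" and E: "is_subfield E" "K \<subseteq> E" and lev: "lev_le k K E d"
  shows "level_closure k d K = level_closure k d E"
proof (rule subset_antisym)
  show "level_closure k d K \<subseteq> level_closure k d E"
    using K E by (intro level_closure_mono) auto
  obtain ys where ys: "level_tower k d K ys" "E \<subseteq> adjoin K (set ys)"
    by (rule level_tower_of_lev_le[OF K(1) lev])
  have "tower_closure k d E \<subseteq> tower_closure k d K"
  proof
    fix x assume "x \<in> tower_closure k d E"
    then obtain xs where xs: "level_tower k d E xs" "x \<in> adjoin E (set xs)"
      by (elim tower_closureE)
    have "level_tower k d K (ys @ xs)"
      using ys xs(1) level_tower_mono[OF ys(2) le_refl] by (simp add: level_tower_append[OF K(1)])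
    moreover have "x \<in> adjoin K (set (ys @ xs))"
      using xs(2) adjoin_mono[OF ys(2), of "set xs" "set xs"] by (auto simp: adjoin_adjoin)
    ultimately show "x \<in> tower_closure k d K" by (rule tower_closureI)
  qed
  then show "level_closure k d E \<subseteq> level_closure k d K"
    using K E by (simp add: level_closure_eq_tower_closure[OF ac])
qed

lemma level_closure_eq_Union_finitely_generated:
  assumes K: "is_subfield K" "k \<subseteq> K" and E: "is_subfield E" "K \<subseteq> E"
  shows "level_closure k d E =
    \<Union>{level_closure k d F | F. is_subfield F \<and> K \<subseteq> F \<and> F \<subseteq> E \<and> (\<exists>S. finite S \<and> F = adjoin K S)}"
    (is "_ = \<Union>?U")
proof (rule subset_antisym)
  show "\<Union>?U \<subseteq> level_closure k d E"
  proof
    fix x assume "x \<in> \<Union>?U"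
    then obtain F where F: "is_subfield F" "K \<subseteq> F" "F \<subseteq> E" "x \<in> level_closure k d F" by blast
    have "level_closure k d F \<subseteq> level_closure k d E"
      using F(1-3) K(2) by (intro level_closure_mono[OF F(1) E(1)]) auto
    with F(4) show "x \<in> level_closure k d E" by blast
  qed
  show "level_closure k d E \<subseteq> \<Union>?U"
  proof
    fix x assume "x \<in> level_closure k d E"
    then obtain xs where xs: "level_tower k d E xs" "x \<in> adjoin E (set xs)"
      using level_closure_eq_tower_closure[OF ac E(1)] K E by (auto elim: tower_closureE)
    then obtain G where G: "finite G" "G \<subseteq> E" "level_tower k d (adjoin K G) xs"
      "x \<in> adjoin (adjoin K G) (set xs)"
      using level_tower_descent[OF K(1) E(1) E(2) xs(1), of "{x}"] by auto
    have F: "is_subfield (adjoin K G)" "K \<subseteq> adjoin K G" "adjoin K G \<subseteq> E"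
      using adjoin_minimal[OF E(1) E(2) G(2)] by (auto simp: subfield_adjoin adjoin_base_subset)
    then have "x \<in> level_closure k d (adjoin K G)"
      using G(3,4) K(2) level_closure_eq_tower_closure[OF ac F(1)] by (auto intro: tower_closureI)
    moreover have "level_closure k d (adjoin K G) \<in> ?U" using F G(1) by blast
    ultimately show "x \<in> \<Union>?U" by blast
  qed
qed

text \<open>The finitely many elements of the level-\<open>d\<close> closure of \<open>K\<close> used by a tower over it lie in
  a single level-\<open>d\<close> tower over \<open>K\<close>, which can be put in front.\<close>

lemma level_closure_level_closure:
  assumes K: "is_subfield K" "k \<subseteq> K" and n: "d \<le> n"
  shows "level_closure k n (level_closure k d K) = level_closure k n K"
proof (rule subset_antisym)
  let ?D = "level_closure k d K"
  have D: "is_subfield ?D" "K \<subseteq> ?D" "k \<subseteq> ?D"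
    using K by (auto simp: level_closure_def subfield_adjoin adjoin_base_subset dest: subsetD[OF adjoin_base_subset])
  show "level_closure k n K \<subseteq> level_closure k n ?D"
    using K D by (intro level_closure_mono) auto
  show "level_closure k n ?D \<subseteq> level_closure k n K"
  proof
    fix x assume "x \<in> level_closure k n ?D"
    then obtain xs where xs: "level_tower k n ?D xs" "x \<in> adjoin ?D (set xs)"
      using level_closure_eq_tower_closure[OF ac D(1) D(3)] by (auto elim: tower_closureE)
    then obtain G where G: "finite G" "G \<subseteq> ?D" "level_tower k n (adjoin K G) xs"
      "x \<in> adjoin (adjoin K G) (set xs)"
      using level_tower_descent[OF K(1) D(1) D(2) xs(1), of "{x}"] by auto
    have "G \<subseteq> tower_closure k d K" using G(2) level_closure_eq_tower_closure[OF ac K(1) K(2)] by simp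
    then obtain ys where ys: "level_tower k d K ys" "G \<subseteq> adjoin K (set ys)"
      by (rule tower_closure_finite_subset[OF K(1) G(1)])
    have sub: "adjoin K G \<subseteq> adjoin K (set ys)"
      by (rule adjoin_minimal[OF subfield_adjoin adjoin_base_subset ys(2)])
    have "level_tower k n K (ys @ xs)"
      using level_tower_mono[OF order_refl n ys(1)] level_tower_mono[OF sub le_refl G(3)]
      by (simp add: level_tower_append[OF K(1)])
    moreover have "x \<in> adjoin K (set (ys @ xs))"
      using G(4) adjoin_mono[OF sub, of "set xs" "set xs"] by (auto simp: adjoin_adjoin)
    ultimately show "x \<in> level_closure k n K"
      using level_closure_eq_tower_closure[OF ac K(1) K(2)] by (auto intro: tower_closureI)
  qed
qed

end

theorem proposition6p3:
  fixes k K E :: "'a::field set" and d :: nat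
  assumes alg_closed: "\<forall>p::'a poly. degree p > 0 \<longrightarrow> (\<exists>x. poly p x = 0)"
    and alg_over_E: "\<forall>x::'a. algebraic_over E x"
    and fields: "is_subfield k" "is_subfield K" "is_subfield E"
    and incl: "k \<subseteq> K" "K \<subseteq> E"
  shows
    "(\<forall>L. is_subfield L \<and> K \<subseteq> L \<and> L \<subseteq> alg_closure_in K \<and> finite_ext K L \<longrightarrow>
         (lev_le k K L d \<longleftrightarrow> L \<subseteq> level_closure k d K))
     \<and> (level_closure k d K \<subseteq> level_closure k d E
        \<and> (finite_ext K E \<and> lev_le k K E d \<longrightarrow> level_closure k d K = level_closure k d E))
     \<and> level_closure k d E =
         \<Union>{level_closure k d F | F. is_subfield F \<and> K \<subseteq> F \<and> F \<subseteq> E \<and>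
                                    (\<exists>S. finite S \<and> F = adjoin K S)}
     \<and> (\<forall>n\<ge>d. level_closure k n (level_closure k d K) = level_closure k n K)
     \<and> level_closure k d (level_closure k d K) = level_closure k d K"
proof (intro conjI allI impI)
  fix L assume "is_subfield L \<and> K \<subseteq> L \<and> L \<subseteq> alg_closure_in K \<and> finite_ext K L"
  then show "lev_le k K L d \<longleftrightarrow> L \<subseteq> level_closure k d K"
    by (intro lev_le_iff_subset_level_closure[OF alg_closed fields(2) incl(1)]) auto
next
  show "level_closure k d K \<subseteq> level_closure k d E"
    by (rule level_closure_mono[OF alg_closed fields(2,3) incl order_refl])
next
  assume "finite_ext K E \<and> lev_le k K E d"
  then show "level_closure k d K = level_closure k d E"
    by (intro level_closure_eq_if_lev_le[OF alg_closed fields(2) incl(1) fields(3) incl(2)]) auto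
next
  show "level_closure k d E = \<Union>{level_closure k d F | F. is_subfield F \<and> K \<subseteq> F \<and> F \<subseteq> E \<and>
                                    (\<exists>S. finite S \<and> F = adjoin K S)}"
    by (rule level_closure_eq_Union_finitely_generated[OF alg_closed fields(2) incl(1) fields(3) incl(2)])
next
  fix n assume "d \<le> n"
  then show "level_closure k n (level_closure k d K) = level_closure k n K"
    by (rule level_closure_level_closure[OF alg_closed fields(2) incl(1)])
next
  show "level_closure k d (level_closure k d K) = level_closure k d K"
    by (rule level_closure_level_closure[OF alg_closed fields(2) incl(1) order_refl])
qed

end
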